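(* Consider the Polyhedral Clinching Auction run on the modified market as described in the context, with all participants reporting truthfully. At the moment just before the clinching step of any iteration, let $x_i=w(E_i)$ for the current $w$, let $d$ be the current demands, and let $X=\{i\in N: d_i>0\}$. Then for every $S\subseteq X$, $g_{x,d}(S)\ge x^*(S)-x(S)$.
   Context: Market model. Buyers $N_0=\{1,\dots,n\}$, sellers $M=\{1,\dots,m\}$, bipartite edge set $E_0\subseteq N_0\times M$; edge $(i,j)$ written $ij$; for a set $S$ of participants $E_S$ is the set of edges incident to a member of $S$ ($E_i=E_{\{i\}}$); $w(F)=\sum_{e\in F}w_e$. Each seller $j$ has a monotone submodular $f_j:2^{E_j}\to\mathbb R_+$, $f_j(\emptyset)=0$ ($f_j(E_j)$ = her total amount of a homogeneous divisible good). Buyer $i$ has per-unit valuation $v_i>0$ and budget $B_i\ge0$; seller $j$ has per-unit valuation $\rho_j>0$. Modified market. For each seller $j$ add a virtual buyer $n+j$ adjacent only to $j$ with $v_{n+j}=\rho_j$, $B_{n+j}=\infty$; $V=\{n+1,\dots,n+m\}$, $N=\{1,\dots,n+m\}$, $E=E_0\cup\{(n+j)j\}$; extend $f_j$ by $f_j(F)=f_j(E_j)$ if $(n+j)j\in F$, unchanged otherwise; $P_j=\{y\in\mathbb R^{E_j}_+:y(F)\le f_j(F)\ \forall F\}$, $P=\{w\in\mathbb R^E_+:w|_{E_j}\in P_j\ \forall j\}$, $f(S)=\sum_jf_j(S\cap E_j)$. For $i\in N$, $H_i$ is the set of buyers $k$ with $v_k>v_i$, or $v_k=v_i$ and $k<i$;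 $x^*\in\mathbb R^N_+$ is defined recursively (decreasing valuation, ties by index) by $x^*_i=\min(B_i/v_i,\min_{H\subseteq H_i}\{f(E_{H\cup\{i\}})-x^*(H)\})$ (an optimal liquid-welfare allocation). For $x\in\mathbb R^N_+$, $d\in[0,\infty]^N$ and $S\subseteq N$: $g_{x,d}(S)=\min_{S'\subseteq S}\bigl\{\min_{S'\subseteq S''\subseteq N}\{f(E_{S''})-x(S'')\}+d(S\setminus S')\bigr\}$. Polyhedral Clinching Auction (PCA) with step $\varepsilon>0$: bids $v'_i$ for $i\in N$ (virtual buyer $n+j$ bids seller $j$'s bid), all assumed to be positive integer multiples of $\varepsilon$. State: $w\in\mathbb R^E_+$, payments $p\in\mathbb R^N_+$, revenues $r\in\mathbb R^M_+$, price clocks $c_i$, demands $d_i\in[0,\infty]$; initially $w=0,p=0,r=0$, $c_i=0$, $d_i=\infty$, pointer $l=1$. For $w,d$ let $P_{w,d}=\{y\in\mathbb R^E_+: w+y\in P,\ y(E_k)\le d_k\ \forall k\}$ and for $\xi\in\mathbb R^{E_i}_+$ let $P^i_{w,d}(\xi)=\{u\in\mathbb R^{N\setminus\{i\}}_+:\exists y\in P_{w,d},\ y|_{E_i}=\xi,\ y(E_k)=u_k\ \forall k\ne i\}$. While some $d_i\neq 0$, an iteration does: (1) clinching step: for $i=1,\dots,n+m$ in turn, choose a maximal $\xi_i\in\mathbb R^{E_i}_+$ with $P^i_{w,d}(\xi_i)=P^i_{w,d}(0)$, set $p_i\leftarrow p_i+c_i\xi_i(E_i)$, $w_{ij}\leftarrow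 w_{ij}+\xi_{ij}$, and reset every demand to $d_k=(B_k-p_k)/c_k$ if $c_k<v'_k$ and $d_k=0$ otherwise ($d_k=\infty$ while $c_k=0$); then $r_j\leftarrow r_j+\sum_{ij\in E_j}c_i\xi_{ij}$; (2) $c_l\leftarrow c_l+\varepsilon$ and $d_l\leftarrow(B_l-p_l)/c_l$ if $c_l<v'_l$, else $d_l\leftarrow0$; (3) advance $l$ cyclically. Truthful reporting means $v'_i=v_i$ for all $i\in N$. *)

theory Defs
  imports Complex_Main "HOL-Library.Extended_Real"
begin

(* ---------- Modified market ----------
   Buyers 1..n, virtual buyers n+1..n+m (virtual buyer n+j belongs to seller j),
   sellers 1..m.  Edges are pairs (buyer, seller). *)

definition NN :: "nat \<Rightarrow> nat \<Rightarrow> nat set" where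
  "NN n m = {1..n+m}"

definition EE :: "nat \<Rightarrow> nat \<Rightarrow> (nat \<times> nat) set \<Rightarrow> (nat \<times> nat) set" where
  "EE n m E0 = E0 \<union> {(n + j, j) | j. j \<in> {1..m}}"

definition Eb :: "nat \<Rightarrow> nat \<Rightarrow> (nat \<times> nat) set \<Rightarrow> nat set \<Rightarrow> (nat \<times> nat) set" where
  "Eb n m E0 S = {e \<in> EE n m E0. fst e \<in> S}"

definition Es :: "nat \<Rightarrow> nat \<Rightarrow> (nat \<times> nat) set \<Rightarrow> nat \<Rightarrow> (nat \<times> nat) set" where
  "Es n m E0 j = {e \<in> EE n m E0. snd e = j}"

definition fx :: "nat \<Rightarrow> (nat \<times> nat) set \<Rightarrow> (nat \<Rightarrow> (nat \<times> nat) set \<Rightarrow> real)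
                   \<Rightarrow> nat \<Rightarrow> (nat \<times> nat) set \<Rightarrow> real" where
  "fx n E0 f j F = (if (n + j, j) \<in> F then f j {e \<in> E0. snd e = j} else f j F)"

definition fN :: "nat \<Rightarrow> nat \<Rightarrow> (nat \<times> nat) set \<Rightarrow> (nat \<Rightarrow> (nat \<times> nat) set \<Rightarrow> real)
                   \<Rightarrow> (nat \<times> nat) set \<Rightarrow> real" where
  "fN n m E0 f F = (\<Sum>j\<in>{1..m}. fx n E0 f j (F \<inter> Es n m E0 j))"

definition inP :: "nat \<Rightarrow> nat \<Rightarrow> (nat \<times> nat) set \<Rightarrow> (nat \<Rightarrow> (nat \<times> nat) set \<Rightarrow> real)
                   \<Rightarrow> (nat \<times> nat \<Rightarrow> real) \<Rightarrow> bool" where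
  "inP n m E0 f w \<longleftrightarrow>
     (\<forall>e. 0 \<le> w e) \<and> (\<forall>e. e \<notin> EE n m E0 \<longrightarrow> w e = 0) \<and>
     (\<forall>j\<in>{1..m}. \<forall>F. F \<subseteq> Es n m E0 j \<longrightarrow> sum w F \<le> fx n E0 f j F)"

definition Vx :: "nat \<Rightarrow> (nat \<Rightarrow> real) \<Rightarrow> (nat \<Rightarrow> real) \<Rightarrow> nat \<Rightarrow> real" where
  "Vx n v rho k = (if k \<le> n then v k else rho (k - n))"

definition Hs :: "nat \<Rightarrow> nat \<Rightarrow> (nat \<Rightarrow> real) \<Rightarrow> (nat \<Rightarrow> real) \<Rightarrow> nat \<Rightarrow> nat set" where
  "Hs n m v rho i = {k \<in> NN n m. Vx n v rho k > Vx n v rho i \<or>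
                                  (Vx n v rho k = Vx n v rho i \<and> k < i)}"

(* xs satisfies the recursive definition of x^* (B_{n+j} = \<infinity>, so the budget term is
   absent for virtual buyers); this determines xs uniquely on N *)
definition xstar_eqs :: "nat \<Rightarrow> nat \<Rightarrow> (nat \<times> nat) set \<Rightarrow> (nat \<Rightarrow> (nat \<times> nat) set \<Rightarrow> real)
     \<Rightarrow> (nat \<Rightarrow> real) \<Rightarrow> (nat \<Rightarrow> real) \<Rightarrow> (nat \<Rightarrow> real) \<Rightarrow> (nat \<Rightarrow> real) \<Rightarrow> bool" where
  "xstar_eqs n m E0 f v B rho xs \<longleftrightarrow>
     (\<forall>i\<in>NN n m.
        xs i = (let mH = Min {fN n m E0 f (Eb n m E0 (H \<union> {i})) - sum xs H | H. H \<subseteq> Hs n m v rho i}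
                in if i \<le> n then min (B i / v i) mH else mH))"

definition gfun :: "nat \<Rightarrow> nat \<Rightarrow> (nat \<times> nat) set \<Rightarrow> (nat \<Rightarrow> (nat \<times> nat) set \<Rightarrow> real)
     \<Rightarrow> (nat \<Rightarrow> real) \<Rightarrow> (nat \<Rightarrow> ereal) \<Rightarrow> nat set \<Rightarrow> ereal" where
  "gfun n m E0 f x d S =
     Min {Min {ereal (fN n m E0 f (Eb n m E0 S'') - sum x S'') | S''. S' \<subseteq> S'' \<and> S'' \<subseteq> NN n m}
            + sum d (S - S') | S'. S' \<subseteq> S}"

record pca_state =
  wt  :: "nat \<times> nat \<Rightarrow> real"
  pay :: "nat \<Rightarrow> real"
  rev :: "nat \<Rightarrow> real"
  clk :: "nat \<Rightarrow> real"
  dem :: "nat \<Rightarrow> ereal"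
  ptr :: nat

definition pca_init :: pca_state where
  "pca_init = \<lparr>wt = (\<lambda>_. 0), pay = (\<lambda>_. 0), rev = (\<lambda>_. 0), clk = (\<lambda>_. 0),
               dem = (\<lambda>_. \<infinity>), ptr = 1\<rparr>"

(* demand of participant k given clock c, payments p, bids bid; budgets B_{n+j} = \<infinity> *)
definition demand :: "nat \<Rightarrow> (nat \<Rightarrow> real) \<Rightarrow> (nat \<Rightarrow> real) \<Rightarrow> (nat \<Rightarrow> real) \<Rightarrow> (nat \<Rightarrow> real)
                      \<Rightarrow> nat \<Rightarrow> ereal" where
  "demand n B bid c p k =
     (if c k = 0 then \<infinity>
      else if c k < bid k then (if k \<le> n then ereal ((B k - p k) / c k) else \<infinity>)
      else 0)"

definition Pwd :: "nat \<Rightarrow> nat \<Rightarrow> (nat \<times> nat) set \<Rightarrow> (nat \<Rightarrow> (nat \<times> nat) set \<Rightarrow> real)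
     \<Rightarrow> (nat \<times> nat \<Rightarrow> real) \<Rightarrow> (nat \<Rightarrow> ereal) \<Rightarrow> (nat \<times> nat \<Rightarrow> real) set" where
  "Pwd n m E0 f w d = {y. (\<forall>e. 0 \<le> y e) \<and> (\<forall>e. e \<notin> EE n m E0 \<longrightarrow> y e = 0) \<and>
       inP n m E0 f (\<lambda>e. w e + y e) \<and>
       (\<forall>k\<in>NN n m. ereal (sum y (Eb n m E0 {k})) \<le> d k)}"

definition Pi_wd :: "nat \<Rightarrow> nat \<Rightarrow> (nat \<times> nat) set \<Rightarrow> (nat \<Rightarrow> (nat \<times> nat) set \<Rightarrow> real)
     \<Rightarrow> (nat \<times> nat \<Rightarrow> real) \<Rightarrow> (nat \<Rightarrow> ereal) \<Rightarrow> nat \<Rightarrow> (nat \<times> nat \<Rightarrow> real) \<Rightarrow> (nat \<Rightarrow> real) set" where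
  "Pi_wd n m E0 f w d i xi = {u. \<exists>y\<in>Pwd n m E0 f w d.
       (\<forall>e\<in>Eb n m E0 {i}. y e = xi e) \<and>
       (\<forall>k\<in>NN n m - {i}. u k = sum y (Eb n m E0 {k})) \<and>
       (\<forall>k. k \<notin> NN n m - {i} \<longrightarrow> u k = 0)}"

definition clinchable :: "nat \<Rightarrow> nat \<Rightarrow> (nat \<times> nat) set \<Rightarrow> (nat \<Rightarrow> (nat \<times> nat) set \<Rightarrow> real)
     \<Rightarrow> (nat \<times> nat \<Rightarrow> real) \<Rightarrow> (nat \<Rightarrow> ereal) \<Rightarrow> nat \<Rightarrow> (nat \<times> nat \<Rightarrow> real) \<Rightarrow> bool" where
  "clinchable n m E0 f w d i xi \<longleftrightarrow>
     (\<forall>e. 0 \<le> xi e) \<and> (\<forall>e. e \<notin> Eb n m E0 {i} \<longrightarrow> xi e = 0) \<and>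
     Pi_wd n m E0 f w d i xi = Pi_wd n m E0 f w d i (\<lambda>_. 0)"

definition max_clinch :: "nat \<Rightarrow> nat \<Rightarrow> (nat \<times> nat) set \<Rightarrow> (nat \<Rightarrow> (nat \<times> nat) set \<Rightarrow> real)
     \<Rightarrow> (nat \<times> nat \<Rightarrow> real) \<Rightarrow> (nat \<Rightarrow> ereal) \<Rightarrow> nat \<Rightarrow> (nat \<times> nat \<Rightarrow> real) \<Rightarrow> bool" where
  "max_clinch n m E0 f w d i xi \<longleftrightarrow>
     clinchable n m E0 f w d i xi \<and>
     \<not> (\<exists>xi'. clinchable n m E0 f w d i xi' \<and> (\<forall>e. xi e \<le> xi' e) \<and> xi' \<noteq> xi)"

definition clinch_update :: "nat \<Rightarrow> nat \<Rightarrow> (nat \<times> nat) set \<Rightarrow> (nat \<Rightarrow> real) \<Rightarrow> (nat \<Rightarrow> real)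
     \<Rightarrow> nat \<Rightarrow> (nat \<times> nat \<Rightarrow> real) \<Rightarrow> pca_state \<Rightarrow> pca_state" where
  "clinch_update n m E0 B bid i xi st =
     (let p' = (pay st)(i := pay st i + clk st i * sum xi (Eb n m E0 {i}))
      in st\<lparr>wt := (\<lambda>e. wt st e + xi e),
            pay := p',
            dem := demand n B bid (clk st) p',
            rev := (\<lambda>j. rev st j + (\<Sum>e\<in>Es n m E0 j \<inter> Eb n m E0 {i}. clk st (fst e) * xi e))\<rparr>)"

inductive clinch_upto :: "nat \<Rightarrow> nat \<Rightarrow> (nat \<times> nat) set \<Rightarrow> (nat \<Rightarrow> (nat \<times> nat) set \<Rightarrow> real)
     \<Rightarrow> (nat \<Rightarrow> real) \<Rightarrow> (nat \<Rightarrow> real) \<Rightarrow> nat \<Rightarrow> pca_state \<Rightarrow> pca_state \<Rightarrow> bool"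
  for n m E0 f B bid where
  clinch_zero: "clinch_upto n m E0 f B bid 0 st st"
| clinch_step: "clinch_upto n m E0 f B bid k st st1 \<Longrightarrow> k + 1 \<le> n + m \<Longrightarrow>
     max_clinch n m E0 f (wt st1) (dem st1) (k + 1) xi \<Longrightarrow>
     clinch_upto n m E0 f B bid (k + 1) st (clinch_update n m E0 B bid (k + 1) xi st1)"

definition clock_advance :: "nat \<Rightarrow> nat \<Rightarrow> (nat \<Rightarrow> real) \<Rightarrow> (nat \<Rightarrow> real) \<Rightarrow> real
     \<Rightarrow> pca_state \<Rightarrow> pca_state" where
  "clock_advance n m B bid eps st =
     (let l = ptr st; c' = (clk st)(l := clk st l + eps)
      in st\<lparr>clk := c',
            dem := (dem st)(l := demand n B bid c' (pay st) l),
            ptr := (if l < n + m then l + 1 else 1)\<rparr>)"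

definition pca_iter :: "nat \<Rightarrow> nat \<Rightarrow> (nat \<times> nat) set \<Rightarrow> (nat \<Rightarrow> (nat \<times> nat) set \<Rightarrow> real)
     \<Rightarrow> (nat \<Rightarrow> real) \<Rightarrow> (nat \<Rightarrow> real) \<Rightarrow> real \<Rightarrow> pca_state \<Rightarrow> pca_state \<Rightarrow> bool" where
  "pca_iter n m E0 f B bid eps st st' \<longleftrightarrow>
     (\<exists>st1. clinch_upto n m E0 f B bid (n + m) st st1 \<and> st' = clock_advance n m B bid eps st1)"

(* states reachable at the beginning of an iteration (loop head), for any admissible choices *)
inductive pca_reach :: "nat \<Rightarrow> nat \<Rightarrow> (nat \<times> nat) set \<Rightarrow> (nat \<Rightarrow> (nat \<times> nat) set \<Rightarrow> real)
     \<Rightarrow> (nat \<Rightarrow> real) \<Rightarrow> (nat \<Rightarrow> real) \<Rightarrow> real \<Rightarrow> pca_state \<Rightarrow> bool"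
  for n m E0 f B bid eps where
  reach_init: "pca_reach n m E0 f B bid eps pca_init"
| reach_iter: "pca_reach n m E0 f B bid eps st \<Longrightarrow> (\<exists>i\<in>NN n m. dem st i \<noteq> 0) \<Longrightarrow>
     pca_iter n m E0 f B bid eps st st' \<Longrightarrow> pca_reach n m E0 f B bid eps st'"

end

theory Submission
  imports Defs
begin

(* The proof is an invariant argument. In every reachable state, for all S \<subseteq> X, S' \<subseteq> S and all
   sets G_j with E_j \<inter> E_S' \<subseteq> G_j \<subseteq> E_j,

     x*(S) - x(S) \<le> \<Sum>_j (f_j(G_j) - w(G_j)) + d(S - S'),

   and G_j = E_j \<inter> E_S'' gives the bound on g_{x,d}(S). Initially this is x*(S) \<le> f(E_S), a
   consequence of the recursive definition of x*. Raising a clock changes a single demand d_l, and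
   under truthful bidding an active agent still demands at least x*_l - x_l. When agent i clinches
   \<xi>, the right-hand side drops by exactly \<xi>(E_i) if i \<in> S'; otherwise a max-flow min-cut
   theorem for polymatroid capacities turns the bound for S' into a flow serving x*(S') - x(S')
   alongside \<xi>. *)

section \<open>Max-flow min-cut for polymatroid seller capacities\<close>

definition submodular_on :: "'a set \<Rightarrow> ('a set \<Rightarrow> real) \<Rightarrow> bool" where
  "submodular_on X h \<longleftrightarrow> (\<forall>F G. F \<subseteq> X \<longrightarrow> G \<subseteq> X \<longrightarrow> h (F \<union> G) + h (F \<inter> G) \<le> h F + h G)"

lemma submodular_onD:
  "submodular_on X h \<Longrightarrow> F \<subseteq> X \<Longrightarrow> G \<subseteq> X \<Longrightarrow> h (F \<union> G) + h (F \<inter> G) \<le> h F + h G"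
  unfolding submodular_on_def by blast

lemma sum_supported:
  fixes y :: "'a \<Rightarrow> 'b::comm_monoid_add"
  assumes "finite S" and "\<forall>x. x \<notin> F \<longrightarrow> y x = 0"
  shows "sum y S = sum y (S \<inter> F)"
  by (rule sum.mono_neutral_right) (use assms in auto)

locale bipartite_network =
  fixes Ed :: "('k \<times> 'j) set" and J :: "'j set" and K :: "'k set"
  assumes finite_Ed: "finite Ed" and finite_J: "finite J" and finite_K: "finite K"
begin

abbreviation star :: "'j \<Rightarrow> ('k \<times> 'j) set" where
  "star j \<equiv> {e \<in> Ed. snd e = j}"

definition admissible_capacity :: "('j \<Rightarrow> ('k \<times> 'j) set \<Rightarrow> real) \<Rightarrow> bool" where
  "admissible_capacity c \<longleftrightarrow>
     (\<forall>j\<in>J. c j {} = 0 \<and> (\<forall>X. X \<subseteq> star j \<longrightarrow> 0 \<le> c j X) \<and> submodular_on (star j) (c j))"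

definition is_flow :: "('k \<times> 'j) set \<Rightarrow> ('j \<Rightarrow> ('k \<times> 'j) set \<Rightarrow> real) \<Rightarrow> ('k \<Rightarrow> real)
    \<Rightarrow> ('k \<times> 'j \<Rightarrow> real) \<Rightarrow> bool" where
  "is_flow F c d y \<longleftrightarrow> (\<forall>e. 0 \<le> y e) \<and> (\<forall>e. e \<notin> F \<longrightarrow> y e = 0) \<and>
     (\<forall>j\<in>J. \<forall>X. X \<subseteq> star j \<longrightarrow> sum y X \<le> c j X) \<and> (\<forall>k\<in>K. sum y {e \<in> F. fst e = k} \<le> d k)"

text \<open>A cut of the network source \<open>\<rightarrow>\<close> buyers \<open>K\<close> (capacities \<open>d\<close>) \<open>\<rightarrow>\<close> edges \<open>F\<close>
  \<open>\<rightarrow>\<close> sellers \<open>J\<close> (polymatroid capacities \<open>c j\<close>) \<open>\<rightarrow>\<close> sink: the buyers outside \<open>A\<close> are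
  separated from the source, and the edges of the buyers in \<open>A\<close> must be covered by the
  seller-side sets \<open>G j\<close>.\<close>

definition is_cut :: "('k \<times> 'j) set \<Rightarrow> 'k set \<Rightarrow> ('j \<Rightarrow> ('k \<times> 'j) set) \<Rightarrow> bool" where
  "is_cut F A G \<longleftrightarrow> A \<subseteq> K \<and> (\<forall>j\<in>J. G j \<subseteq> star j \<and> {e \<in> F. fst e \<in> A \<and> snd e = j} \<subseteq> G j)"

definition cut_value :: "('j \<Rightarrow> ('k \<times> 'j) set \<Rightarrow> real) \<Rightarrow> ('k \<Rightarrow> real) \<Rightarrow> 'k set
    \<Rightarrow> ('j \<Rightarrow> ('k \<times> 'j) set) \<Rightarrow> real" where
  "cut_value c d A G = (\<Sum>j\<in>J. c j (G j)) + sum d (K - A)"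

definition residual_capacity :: "'k \<times> 'j \<Rightarrow> real \<Rightarrow> ('j \<Rightarrow> ('k \<times> 'j) set \<Rightarrow> real)
    \<Rightarrow> 'j \<Rightarrow> ('k \<times> 'j) set \<Rightarrow> real" where
  "residual_capacity e t c j X = c j X - (if e \<in> X then t else 0)"

definition residual_demand :: "'k \<times> 'j \<Rightarrow> real \<Rightarrow> ('k \<Rightarrow> real) \<Rightarrow> 'k \<Rightarrow> real" where
  "residual_demand e t d k = d k - (if k = fst e then t else 0)"

definition safe_edge_amount :: "('k \<times> 'j) set \<Rightarrow> ('j \<Rightarrow> ('k \<times> 'j) set \<Rightarrow> real) \<Rightarrow> ('k \<Rightarrow> real)
    \<Rightarrow> real \<Rightarrow> 'k \<times> 'j \<Rightarrow> real \<Rightarrow> bool" where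
  "safe_edge_amount F c d R e t \<longleftrightarrow> 0 \<le> t \<and> t \<le> d (fst e) \<and>
     (\<forall>X. X \<subseteq> star (snd e) \<longrightarrow> e \<in> X \<longrightarrow> t \<le> c (snd e) X) \<and>
     (\<forall>A G. is_cut F A G \<longrightarrow> fst e \<in> A \<longrightarrow> e \<notin> G (snd e) \<longrightarrow> R - cut_value c d A G \<le> t) \<and>
     (\<forall>A G. is_cut F A G \<longrightarrow> fst e \<notin> A \<longrightarrow> e \<in> G (snd e) \<longrightarrow> t \<le> cut_value c d A G - R)"

lemma admissible_capacityD:
  assumes "admissible_capacity c" and "j \<in> J"
  shows "c j {} = 0" and "X \<subseteq> star j \<Longrightarrow> 0 \<le> c j X" and "submodular_on (star j) (c j)"
  using assms unfolding admissible_capacity_def by blast+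

lemma finite_star: "finite (star j)"
  using finite_Ed by simp

lemma is_cut_insert:
  assumes "is_cut F A G" and "fst e \<in> A \<Longrightarrow> e \<in> G (snd e)"
  shows "is_cut (insert e F) A G"
  using assms unfolding is_cut_def by auto

lemma is_cut_Un:
  assumes "is_cut F A1 G1" "is_cut F A2 G2"
  shows "is_cut F (A1 \<union> A2) (\<lambda>j. G1 j \<union> G2 j)"
  using assms unfolding is_cut_def by blast

lemma is_cut_Int:
  assumes "is_cut F A1 G1" "is_cut F A2 G2"
  shows "is_cut F (A1 \<inter> A2) (\<lambda>j. G1 j \<inter> G2 j)"
  using assms unfolding is_cut_def by blast

lemma cut_value_submodular:
  assumes c: "admissible_capacity c" and cuts: "is_cut F A1 G1" "is_cut F A2 G2"
  shows "cut_value c d (A1 \<union> A2) (\<lambda>j. G1 j \<union> G2 j) + cut_value c d (A1 \<inter> A2) (\<lambda>j. G1 j \<inter> G2 j)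
    \<le> cut_value c d A1 G1 + cut_value c d A2 G2"
proof -
  have "(\<Sum>j\<in>J. c j (G1 j \<union> G2 j) + c j (G1 j \<inter> G2 j)) \<le> (\<Sum>j\<in>J. c j (G1 j) + c j (G2 j))"
  proof (rule sum_mono)
    fix j assume j: "j \<in> J"
    note admissible_capacityD(3)[OF c j]
    moreover have "G1 j \<subseteq> star j" "G2 j \<subseteq> star j" using cuts j unfolding is_cut_def by blast+
    ultimately show "c j (G1 j \<union> G2 j) + c j (G1 j \<inter> G2 j) \<le> c j (G1 j) + c j (G2 j)"
      by (rule submodular_onD)
  qed
  moreover have "sum d (K - (A1 \<union> A2)) + sum d (K - (A1 \<inter> A2)) = sum d (K - A1) + sum d (K - A2)"
  proof -
    have "K - (A1 \<union> A2) = (K - A1) \<inter> (K - A2)" "K - (A1 \<inter> A2) = (K - A1) \<union> (K - A2)" by blast+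
    then show ?thesis using sum.union_inter[of "K - A1" "K - A2" d] finite_K by simp
  qed
  ultimately show ?thesis
    unfolding cut_value_def sum.distrib by linarith
qed

lemma cut_cover_edge:
  assumes c: "admissible_capacity c" and cut: "is_cut F A G" and j: "snd e \<in> J"
    and X: "X \<subseteq> star (snd e)" "e \<in> X"
  shows "is_cut (insert e F) A (G(snd e := G (snd e) \<union> X))"
    and "cut_value c d A (G(snd e := G (snd e) \<union> X)) \<le> cut_value c d A G + c (snd e) X"
proof -
  show "is_cut (insert e F) A (G(snd e := G (snd e) \<union> X))"
    using cut X unfolding is_cut_def by auto
  have "c (snd e) (G (snd e) \<union> X) \<le> c (snd e) (G (snd e)) + c (snd e) X"
  proof -
    have G: "G (snd e) \<subseteq> star (snd e)" using cut j unfolding is_cut_def by blast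
    then have "0 \<le> c (snd e) (G (snd e) \<inter> X)"
      by (intro admissible_capacityD(2)[OF c j]) blast
    moreover have "c (snd e) (G (snd e) \<union> X) + c (snd e) (G (snd e) \<inter> X)
        \<le> c (snd e) (G (snd e)) + c (snd e) X"
      using admissible_capacityD(3)[OF c j] G X(1) by (rule submodular_onD)
    ultimately show ?thesis by linarith
  qed
  moreover have "(\<Sum>j\<in>J. c j ((G(snd e := G (snd e) \<union> X)) j))
      = c (snd e) (G (snd e) \<union> X) + (\<Sum>j\<in>J - {snd e}. c j (G j))"
    using sum.remove[OF finite_J j, of "\<lambda>j. c j ((G(snd e := G (snd e) \<union> X)) j)"] by simp
  moreover have "(\<Sum>j\<in>J. c j (G j)) = c (snd e) (G (snd e)) + (\<Sum>j\<in>J - {snd e}. c j (G j))"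
    by (rule sum.remove[OF finite_J j])
  ultimately have "(\<Sum>j\<in>J. c j ((G(snd e := G (snd e) \<union> X)) j)) \<le> (\<Sum>j\<in>J. c j (G j)) + c (snd e) X"
    by linarith
  then show "cut_value c d A (G(snd e := G (snd e) \<union> X)) \<le> cut_value c d A G + c (snd e) X"
    unfolding cut_value_def by simp
qed

lemma cut_drop_buyer:
  assumes cut: "is_cut F A G" and k: "fst e \<in> A"
  shows "is_cut (insert e F) (A - {fst e}) G"
    and "cut_value c d (A - {fst e}) G = cut_value c d A G + d (fst e)"
proof -
  show "is_cut (insert e F) (A - {fst e}) G"
    using cut unfolding is_cut_def by blast
  have "K - (A - {fst e}) = insert (fst e) (K - A)" using cut k unfolding is_cut_def by blast
  then show "cut_value c d (A - {fst e}) G = cut_value c d A G + d (fst e)"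
    unfolding cut_value_def using finite_K k by simp
qed

lemma cut_value_residual:
  assumes cut: "is_cut F A G" and e: "fst e \<in> K" "snd e \<in> J"
  shows "cut_value (residual_capacity e t c) (residual_demand e t d) A G
    = cut_value c d A G - (if e \<in> G (snd e) then t else 0) - (if fst e \<in> A then 0 else t)"
proof -
  have G: "\<forall>j\<in>J. G j \<subseteq> star j" using cut unfolding is_cut_def by blast
  have "(\<Sum>j\<in>J. residual_capacity e t c j (G j))
      = (\<Sum>j\<in>J. c j (G j) - (if j = snd e then (if e \<in> G (snd e) then t else 0) else 0))"
    unfolding residual_capacity_def using G by (intro sum.cong) auto
  also have "\<dots> = (\<Sum>j\<in>J. c j (G j)) - (if e \<in> G (snd e) then t else 0)"
    using e finite_J by (simp add: sum_subtractf)
  finally have "(\<Sum>j\<in>J. residual_capacity e t c j (G j)) = \<dots>" .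
  moreover have "sum (residual_demand e t d) (K - A)
      = sum d (K - A) - (if fst e \<in> A then 0 else t)"
    using finite_K e unfolding residual_demand_def by (simp add: sum_subtractf)
  ultimately show ?thesis
    unfolding cut_value_def by simp
qed

lemma cut_gap_le_capacity:
  assumes c: "admissible_capacity c" and cuts: "\<And>A G. is_cut (insert e F) A G \<Longrightarrow> R \<le> cut_value c d A G"
    and cut: "is_cut F A G" and j: "snd e \<in> J" and X: "X \<subseteq> star (snd e)" "e \<in> X"
  shows "R - cut_value c d A G \<le> c (snd e) X"
proof -
  have "R \<le> cut_value c d A (G(snd e := G (snd e) \<union> X))"
    by (rule cuts[OF cut_cover_edge(1)[OF c cut j X]])
  also have "\<dots> \<le> cut_value c d A G + c (snd e) X"
    by (rule cut_cover_edge(2)[OF c cut j X])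
  finally show ?thesis by simp
qed

lemma cut_gap_le_demand:
  assumes cuts: "\<And>A G. is_cut (insert e F) A G \<Longrightarrow> R \<le> cut_value c d A G"
    and cut: "is_cut F A G" "fst e \<in> A"
  shows "R - cut_value c d A G \<le> d (fst e)"
  using cuts[OF cut_drop_buyer(1)[OF cut]] cut_drop_buyer(2)[OF cut] by simp

lemma cut_uncrossing:
  assumes c: "admissible_capacity c" and cuts: "\<And>A G. is_cut (insert e F) A G \<Longrightarrow> R \<le> cut_value c d A G"
    and cut1: "is_cut F A1 G1" "fst e \<in> A1" "e \<notin> G1 (snd e)"
    and cut2: "is_cut F A2 G2" "fst e \<notin> A2" "e \<in> G2 (snd e)"
  shows "R - cut_value c d A1 G1 \<le> cut_value c d A2 G2 - R"
proof -
  have "R \<le> cut_value c d (A1 \<union> A2) (\<lambda>j. G1 j \<union> G2 j)"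
    by (rule cuts, rule is_cut_insert[OF is_cut_Un[OF cut1(1) cut2(1)]]) (use cut2(3) in blast)
  moreover have "R \<le> cut_value c d (A1 \<inter> A2) (\<lambda>j. G1 j \<inter> G2 j)"
    by (rule cuts, rule is_cut_insert[OF is_cut_Int[OF cut1(1) cut2(1)]]) (use cut2(2) in blast)
  ultimately show ?thesis
    using cut_value_submodular[OF c cut1(1) cut2(1), of d] by linarith
qed

text \<open>The flow \<open>t\<close> put on one edge \<open>e\<close> must fit the capacities at both ends of \<open>e\<close>, and every
  residual cut must keep value at least \<open>R - t\<close>. A cut of \<open>F\<close> that is no cut of \<open>insert e F\<close>
  bounds \<open>t\<close> from below, one that pays for \<open>e\<close> at both ends bounds it from above; by uncrossing,
  the supremum of the lower bounds satisfies all upper bounds.\<close>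

lemma edge_flow_amount:
  assumes c: "admissible_capacity c" and d: "\<forall>k\<in>K. 0 \<le> d k"
    and e: "e \<in> Ed" "fst e \<in> K" "snd e \<in> J"
    and cuts: "\<And>A G. is_cut (insert e F) A G \<Longrightarrow> R \<le> cut_value c d A G"
  obtains t where "safe_edge_amount F c d R e t"
proof -
  define L where
    "L = insert 0 {R - cut_value c d A G | A G. is_cut F A G \<and> fst e \<in> A \<and> e \<notin> G (snd e)}"
  have below: "l \<le> u"
    if "l \<in> L" and "0 \<le> u"
      and "\<And>A G. is_cut F A G \<Longrightarrow> fst e \<in> A \<Longrightarrow> e \<notin> G (snd e) \<Longrightarrow> R - cut_value c d A G \<le> u"
    for l u
    using that unfolding L_def by blast
  have le_c: "l \<le> c (snd e) X" if "l \<in> L" "X \<subseteq> star (snd e)" "e \<in> X" for l X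
    using below[OF that(1) admissible_capacityD(2)[OF c e(3) that(2)]]
      cut_gap_le_capacity[OF c cuts _ e(3) that(2,3)] by blast
  have le_d: "l \<le> d (fst e)" if "l \<in> L" for l
    using below[OF that] d e(2) cut_gap_le_demand[OF cuts] by blast
  have le_cut: "l \<le> cut_value c d A2 G2 - R"
    if "l \<in> L" and cut2: "is_cut F A2 G2" "fst e \<notin> A2" "e \<in> G2 (snd e)" for l A2 G2
  proof (rule below[OF that(1)])
    show "0 \<le> cut_value c d A2 G2 - R"
      using cuts[OF is_cut_insert[OF cut2(1)]] cut2(2) by simp
    fix A1 G1 assume "is_cut F A1 G1" "fst e \<in> A1" "e \<notin> G1 (snd e)"
    from cut_uncrossing[OF c cuts this cut2]
    show "R - cut_value c d A1 G1 \<le> cut_value c d A2 G2 - R" .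
  qed
  have "{e} \<subseteq> star (snd e)" using e(1) by blast
  then have bdd: "bdd_above L"
    using le_c by (intro bdd_aboveI[of _ "c (snd e) {e}"]) blast
  have ne: "L \<noteq> {}" unfolding L_def by blast
  have "safe_edge_amount F c d R e (Sup L)"
    unfolding safe_edge_amount_def
  proof (intro conjI allI impI)
    show "0 \<le> Sup L" using cSup_upper[OF _ bdd] unfolding L_def by blast
    show "Sup L \<le> d (fst e)" using le_d ne by (intro cSup_least) auto
    show "Sup L \<le> c (snd e) X" if "X \<subseteq> star (snd e)" "e \<in> X" for X
      using le_c[OF _ that] ne by (intro cSup_least) auto
    show "R - cut_value c d A G \<le> Sup L" if "is_cut F A G" "fst e \<in> A" "e \<notin> G (snd e)" for A G
      using that by (intro cSup_upper[OF _ bdd]) (auto simp: L_def)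
    show "Sup L \<le> cut_value c d A G - R" if "is_cut F A G" "fst e \<notin> A" "e \<in> G (snd e)" for A G
      using le_cut[OF _ that] ne by (intro cSup_least) auto
  qed
  then show ?thesis by (rule that)
qed

lemma residual_network:
  assumes c: "admissible_capacity c" and d: "\<forall>k\<in>K. 0 \<le> d k" and e: "fst e \<in> K" "snd e \<in> J"
    and cuts: "\<And>A G. is_cut (insert e F) A G \<Longrightarrow> R \<le> cut_value c d A G"
    and t: "safe_edge_amount F c d R e t"
  shows "admissible_capacity (residual_capacity e t c)"
    and "\<forall>k\<in>K. 0 \<le> residual_demand e t d k"
    and "\<And>A G. is_cut F A G \<Longrightarrow> R - t \<le> cut_value (residual_capacity e t c) (residual_demand e t d) A G"
proof -
  have t0: "0 \<le> t" and t_d: "t \<le> d (fst e)"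
    and t_c: "\<And>X. X \<subseteq> star (snd e) \<Longrightarrow> e \<in> X \<Longrightarrow> t \<le> c (snd e) X"
    and t_low: "\<And>A G. is_cut F A G \<Longrightarrow> fst e \<in> A \<Longrightarrow> e \<notin> G (snd e) \<Longrightarrow> R - cut_value c d A G \<le> t"
    and t_up: "\<And>A G. is_cut F A G \<Longrightarrow> fst e \<notin> A \<Longrightarrow> e \<in> G (snd e) \<Longrightarrow> t \<le> cut_value c d A G - R"
    using t unfolding safe_edge_amount_def by blast+
  show "admissible_capacity (residual_capacity e t c)"
    unfolding admissible_capacity_def
  proof (intro ballI conjI allI impI)
    fix j assume j: "j \<in> J"
    show "residual_capacity e t c j {} = 0"
      unfolding residual_capacity_def using admissible_capacityD(1)[OF c j] by simp
    show "0 \<le> residual_capacity e t c j X" if "X \<subseteq> star j" for X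
      unfolding residual_capacity_def using admissible_capacityD(2)[OF c j that] t_c[of X] that by auto
    show "submodular_on (star j) (residual_capacity e t c j)"
      unfolding submodular_on_def residual_capacity_def
      using submodular_onD[OF admissible_capacityD(3)[OF c j]] by auto
  qed
  show "\<forall>k\<in>K. 0 \<le> residual_demand e t d k"
    using d t_d unfolding residual_demand_def by simp
  fix A G assume cut: "is_cut F A G"
  have "R \<le> cut_value c d A G" if "fst e \<in> A \<Longrightarrow> e \<in> G (snd e)"
    using cuts[OF is_cut_insert[OF cut that]] .
  then show "R - t \<le> cut_value (residual_capacity e t c) (residual_demand e t d) A G"
    unfolding cut_value_residual[OF cut e] using t0 t_low[OF cut] t_up[OF cut]
    by (cases "fst e \<in> A") auto
qed

lemma is_flow_insert:
  assumes y: "is_flow F (residual_capacity e t c) (residual_demand e t d) y"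
    and F: "finite F" "e \<notin> F" and t: "0 \<le> t"
  defines "y' \<equiv> \<lambda>x. y x + (if x = e then t else 0)"
  shows "is_flow (insert e F) c d y'" and "sum y' (insert e F) = sum y F + t"
proof -
  have y_nonneg: "\<forall>x. 0 \<le> y x" and y_supp: "\<forall>x. x \<notin> F \<longrightarrow> y x = 0"
    and y_cap: "\<And>j X. j \<in> J \<Longrightarrow> X \<subseteq> star j \<Longrightarrow> sum y X \<le> c j X - (if e \<in> X then t else 0)"
    and y_dem: "\<And>k. k \<in> K \<Longrightarrow> sum y {x \<in> F. fst x = k} \<le> d k - (if k = fst e then t else 0)"
    using y unfolding is_flow_def residual_capacity_def residual_demand_def by blast+
  have sum_y': "sum y' X = sum y X + (if e \<in> X then t else 0)" if "finite X" for X
    unfolding y'_def using that by (simp add: sum.distrib)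
  show "sum y' (insert e F) = sum y F + t"
    using sum_y'[of "insert e F"] F y_supp by simp
  show "is_flow (insert e F) c d y'"
    unfolding is_flow_def
  proof (intro conjI allI ballI impI)
    show "0 \<le> y' x" for x using y_nonneg[rule_format, of x] t unfolding y'_def by simp
    show "y' x = 0" if "x \<notin> insert e F" for x
      using that y_supp[rule_format, of x] unfolding y'_def by simp
    show "sum y' X \<le> c j X" if "j \<in> J" "X \<subseteq> star j" for j X
      using y_cap[OF that] sum_y'[OF finite_subset[OF that(2) finite_star]] by simp
    fix k assume k: "k \<in> K"
    have fin: "finite {x \<in> insert e F. fst x = k}" using F by simp
    have "sum y {x \<in> insert e F. fst x = k} = sum y {x \<in> F. fst x = k}"
    proof -
      have "{x \<in> insert e F. fst x = k} \<inter> F = {x \<in> F. fst x = k}" by blast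
      then show ?thesis using sum_supported[OF fin y_supp] by simp
    qed
    then show "sum y' {x \<in> insert e F. fst x = k} \<le> d k"
      using y_dem[OF k] sum_y'[OF fin] by (simp split: if_splits)
  qed
qed

theorem max_flow_min_cut:
  assumes F: "F \<subseteq> Ed" "\<forall>e\<in>F. fst e \<in> K \<and> snd e \<in> J"
    and c: "admissible_capacity c" and d: "\<forall>k\<in>K. 0 \<le> d k"
    and cuts: "\<And>A G. is_cut F A G \<Longrightarrow> R \<le> cut_value c d A G"
  shows "\<exists>y. is_flow F c d y \<and> R \<le> sum y F"
proof -
  have "finite F" using F(1) finite_Ed finite_subset by blast
  then show ?thesis using F c d cuts
  proof (induction F arbitrary: c d R rule: finite_induct)
    case empty
    have "is_cut {} K (\<lambda>_. {})" unfolding is_cut_def by blast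
    then have "R \<le> cut_value c d K (\<lambda>_. {})" by (rule empty.prems(5))
    then have "R \<le> 0"
      using admissible_capacityD(1)[OF empty.prems(3)] unfolding cut_value_def by simp
    moreover have "is_flow {} c d (\<lambda>_. 0)"
      using admissible_capacityD(2)[OF empty.prems(3)] empty.prems(4) unfolding is_flow_def by simp
    ultimately show ?case by auto
  next
    case (insert e F)
    have e: "e \<in> Ed" "fst e \<in> K" "snd e \<in> J" using insert.prems(1,2) by auto
    obtain t where t: "safe_edge_amount F c d R e t"
      using edge_flow_amount[OF insert.prems(3,4) e insert.prems(5)] .
    note residual = residual_network[OF insert.prems(3,4) e(2,3) insert.prems(5) t]
    obtain y where "is_flow F (residual_capacity e t c) (residual_demand e t d) y" "R - t \<le> sum y F"
      using insert.IH[OF _ _ residual(1,2) residual(3)] insert.prems(1,2) by blast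
    moreover have "0 \<le> t" using t unfolding safe_edge_amount_def by blast
    ultimately show ?case using is_flow_insert[OF _ insert.hyps] by fastforce
  qed
qed

end

section \<open>The modified market\<close>

locale market =
  fixes n m :: nat and E0 :: "(nat \<times> nat) set"
    and f :: "nat \<Rightarrow> (nat \<times> nat) set \<Rightarrow> real"
  assumes E0: "E0 \<subseteq> {1..n} \<times> {1..m}"
    and f_empty: "\<forall>j\<in>{1..m}. f j {} = 0"
    and f_nonneg: "\<forall>j\<in>{1..m}. \<forall>F. F \<subseteq> {e \<in> E0. snd e = j} \<longrightarrow> 0 \<le> f j F"
    and f_mono: "\<forall>j\<in>{1..m}. \<forall>F G. F \<subseteq> G \<and> G \<subseteq> {e \<in> E0. snd e = j} \<longrightarrow> f j F \<le> f j G"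
    and f_submod: "\<forall>j\<in>{1..m}. \<forall>F G. F \<subseteq> {e \<in> E0. snd e = j} \<and> G \<subseteq> {e \<in> E0. snd e = j} \<longrightarrow>
                      f j (F \<union> G) + f j (F \<inter> G) \<le> f j F + f j G"
begin

abbreviation "edges \<equiv> EE n m E0"
abbreviation "seller_edges \<equiv> Es n m E0"
abbreviation "buyer_edges \<equiv> Eb n m E0"
abbreviation "agents \<equiv> NN n m"
abbreviation "cap \<equiv> fx n E0 f"
abbreviation "in_P \<equiv> inP n m E0 f"

abbreviation alloc :: "(nat \<times> nat \<Rightarrow> real) \<Rightarrow> nat \<Rightarrow> real" where
  "alloc w k \<equiv> sum w (buyer_edges {k})"

lemma finite_edges: "finite edges"
proof -
  have "finite E0" using E0 finite_subset by blast
  moreover have "{(n + j, j) |j. j \<in> {1..m}} = (\<lambda>j. (n + j, j)) ` {1..m}" by auto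
  ultimately show ?thesis unfolding EE_def by simp
qed

lemma finite_agents: "finite agents"
  unfolding NN_def by simp

lemma finite_seller_edges: "finite (seller_edges j)"
  unfolding Es_def using finite_edges by simp

lemma seller_of_edge: "e \<in> edges \<Longrightarrow> snd e \<in> {1..m}"
  unfolding EE_def using E0 by auto

lemma buyer_edges_subset: "buyer_edges S \<subseteq> edges"
  unfolding Eb_def by blast

lemma real_seller_edges:
  assumes "F \<subseteq> seller_edges j" and "(n + j, j) \<notin> F"
  shows "F \<subseteq> {e \<in> E0. snd e = j}"
  using assms unfolding Es_def EE_def by auto

lemma cap_empty: "j \<in> {1..m} \<Longrightarrow> cap j {} = 0"
  unfolding fx_def using f_empty by simp

lemma cap_nonneg: "j \<in> {1..m} \<Longrightarrow> F \<subseteq> seller_edges j \<Longrightarrow> 0 \<le> cap j F"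
  unfolding fx_def using f_nonneg real_seller_edges by auto

lemma cap_mono:
  assumes j: "j \<in> {1..m}" and FG: "F \<subseteq> G" and G: "G \<subseteq> seller_edges j"
  shows "cap j F \<le> cap j G"
proof (cases "(n + j, j) \<in> G")
  case True
  have "f j F \<le> f j {e \<in> E0. snd e = j}" if "(n + j, j) \<notin> F"
    using f_mono j real_seller_edges[OF order.trans[OF FG G] that] by auto
  then show ?thesis unfolding fx_def using True by auto
next
  case False
  then show ?thesis
    unfolding fx_def using f_mono j FG real_seller_edges[OF G False] by auto
qed

text \<open>The virtual buyer's edge \<open>(n + j, j)\<close> saturates \<open>f j\<close>, so the extension stays submodular.\<close>

lemma cap_submodular:
  assumes j: "j \<in> {1..m}"
  shows "submodular_on (seller_edges j) (cap j)"
  unfolding submodular_on_def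
proof (intro allI impI)
  fix F G assume F: "F \<subseteq> seller_edges j" and G: "G \<subseteq> seller_edges j"
  let ?v = "(n + j, j)"
  consider "?v \<in> F" "?v \<in> G" | "?v \<in> F" "?v \<notin> G" | "?v \<notin> F" "?v \<in> G" | "?v \<notin> F" "?v \<notin> G"
    by blast
  then show "cap j (F \<union> G) + cap j (F \<inter> G) \<le> cap j F + cap j G"
  proof cases
    case 1
    then show ?thesis unfolding fx_def by simp
  next
    case 2
    then show ?thesis using cap_mono[OF j _ G, of "F \<inter> G"] unfolding fx_def by simp
  next
    case 3
    then show ?thesis using cap_mono[OF j _ F, of "F \<inter> G"] unfolding fx_def by simp
  next
    case 4
    then show ?thesis
      using f_submod j real_seller_edges[OF F] real_seller_edges[OF G] unfolding fx_def by auto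
  qed
qed

lemma fN_nonneg: "0 \<le> fN n m E0 f F"
  unfolding fN_def by (rule sum_nonneg) (rule cap_nonneg, auto simp: Es_def)

lemma sum_alloc:
  assumes "finite S"
  shows "(\<Sum>k\<in>S. alloc w k) = sum w (buyer_edges S)"
proof -
  have "buyer_edges S = (\<Union>k\<in>S. buyer_edges {k})" unfolding Eb_def by auto
  moreover have "finite (buyer_edges {k})" for k
    using finite_subset[OF buyer_edges_subset finite_edges] .
  moreover have "buyer_edges {k} \<inter> buyer_edges {k'} = {}" if "k \<noteq> k'" for k k'
    using that unfolding Eb_def by auto
  ultimately show ?thesis
    using assms by (simp add: sum.UNION_disjoint)
qed

lemma sum_seller_edges:
  assumes "F \<subseteq> edges"
  shows "(\<Sum>j\<in>{1..m}. sum w (F \<inter> seller_edges j)) = sum w F"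
proof -
  have "finite F" using assms finite_edges finite_subset by blast
  moreover have "snd ` F \<subseteq> {1..m}" using assms seller_of_edge by blast
  moreover have "F \<inter> seller_edges j = {x \<in> F. snd x = j}" for j
    using assms unfolding Es_def by auto
  ultimately show ?thesis using sum.group[of F "{1..m}" snd w] by simp
qed

lemma alloc_outside_support:
  assumes "\<forall>e. e \<notin> buyer_edges {i} \<longrightarrow> xi e = 0" and "k \<noteq> i"
  shows "alloc xi k = 0"
  using assms unfolding Eb_def by (intro sum.neutral) auto

lemma clinched_amount_in_cut:
  assumes xi: "\<forall>e. e \<notin> buyer_edges {i} \<longrightarrow> xi e = 0" and i: "i \<in> S'"
    and G: "\<And>j. j \<in> {1..m} \<Longrightarrow> seller_edges j \<inter> buyer_edges S' \<subseteq> G j \<and> G j \<subseteq> seller_edges j"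
  shows "(\<Sum>j\<in>{1..m}. sum xi (G j)) = alloc xi i"
proof -
  have "sum xi (G j) = sum xi (buyer_edges {i} \<inter> seller_edges j)" if j: "j \<in> {1..m}" for j
  proof -
    have Gj: "G j \<subseteq> seller_edges j" using G[OF j] by blast
    have "G j \<inter> buyer_edges {i} = buyer_edges {i} \<inter> seller_edges j"
      using G[OF j] i unfolding Eb_def by blast
    then show ?thesis
      using sum_supported[OF finite_subset[OF Gj finite_seller_edges] xi] by simp
  qed
  then show ?thesis
    using sum_seller_edges[OF buyer_edges_subset, of xi "{i}"] by simp
qed

lemma in_P_nonneg: "in_P w \<Longrightarrow> 0 \<le> w e"
  unfolding inP_def by blast

lemma in_P_vanishes: "in_P w \<Longrightarrow> e \<notin> edges \<Longrightarrow> w e = 0"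
  unfolding inP_def by blast

lemma in_P_le_cap: "in_P w \<Longrightarrow> j \<in> {1..m} \<Longrightarrow> F \<subseteq> seller_edges j \<Longrightarrow> sum w F \<le> cap j F"
  unfolding inP_def by blast

lemma in_P_downward_closed:
  assumes z: "in_P z" and le: "\<And>e. 0 \<le> z' e \<and> z' e \<le> z e"
  shows "in_P z'"
  unfolding inP_def
proof (intro conjI allI ballI impI)
  show "0 \<le> z' e" for e using le by blast
  show "z' e = 0" if "e \<notin> edges" for e using le[of e] in_P_vanishes[OF z that] by simp
  show "sum z' F \<le> cap j F" if "j \<in> {1..m}" "F \<subseteq> seller_edges j" for j F
    using sum_mono[of F z' z] le in_P_le_cap[OF z that] by force
qed

lemma PwdD:
  assumes "y \<in> Pwd n m E0 f w d"
  shows "0 \<le> y e" and "in_P (\<lambda>e. w e + y e)" and "k \<in> agents \<Longrightarrow> ereal (alloc y k) \<le> d k"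
  using assms unfolding Pwd_def by blast+

lemma zero_in_Pwd: "in_P w \<Longrightarrow> \<forall>k\<in>agents. 0 \<le> d k \<Longrightarrow> (\<lambda>_. 0) \<in> Pwd n m E0 f w d"
  unfolding Pwd_def by (auto simp: zero_ereal_def)

lemma clinchable_transfer:
  assumes xi: "clinchable n m E0 f w d i xi"
    and y: "y \<in> Pwd n m E0 f w d" "\<forall>e\<in>buyer_edges {i}. y e = 0"
  obtains z where "z \<in> Pwd n m E0 f w d" and "\<forall>e\<in>buyer_edges {i}. z e = xi e"
    and "\<forall>k\<in>agents - {i}. alloc z k = alloc y k"
proof -
  define u where "u = (\<lambda>k. if k \<in> agents - {i} then alloc y k else 0)"
  have "u \<in> Pi_wd n m E0 f w d i (\<lambda>_. 0)"
    unfolding Pi_wd_def u_def using y by auto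
  then have "u \<in> Pi_wd n m E0 f w d i xi"
    using xi unfolding clinchable_def by simp
  then show ?thesis
    using that unfolding Pi_wd_def u_def by auto
qed

lemma flow_fits_beside_clinch:
  assumes z: "in_P (\<lambda>e. w e + z e)" "\<forall>e. 0 \<le> z e" and z_xi: "\<forall>e\<in>buyer_edges {i}. z e = xi e"
    and xi: "\<forall>e. e \<notin> buyer_edges {i} \<longrightarrow> xi e = 0" and i: "i \<notin> S'" and j: "j \<in> {1..m}"
    and G: "seller_edges j \<inter> buyer_edges S' \<subseteq> G" "G \<subseteq> seller_edges j"
  shows "sum z (buyer_edges S' \<inter> seller_edges j) \<le> cap j G - sum w G - sum xi G"
proof -
  have fin: "finite G" using finite_subset[OF G(2) finite_seller_edges] .
  have "sum w G + sum z G \<le> cap j G"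
    using in_P_le_cap[OF z(1) j G(2)] by (simp add: sum.distrib)
  moreover have "sum xi G = sum z (G \<inter> buyer_edges {i})"
    using sum_supported[OF fin xi] z_xi by simp
  moreover have "(G \<inter> buyer_edges {i}) \<inter> (buyer_edges S' \<inter> seller_edges j) = {}"
    using i unfolding Eb_def by auto
  then have "sum z (G \<inter> buyer_edges {i}) + sum z (buyer_edges S' \<inter> seller_edges j)
      = sum z ((G \<inter> buyer_edges {i}) \<union> (buyer_edges S' \<inter> seller_edges j))"
    using fin finite_seller_edges by (simp add: sum.union_disjoint)
  moreover have "\<dots> \<le> sum z G"
    using G fin z(2) by (intro sum_mono2) auto
  ultimately show ?thesis by linarith
qed

lemma clinch_feasible:
  assumes w: "in_P w" and d: "\<forall>k\<in>agents. 0 \<le> d k" and i: "i \<in> agents"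
    and xi: "clinchable n m E0 f w d i xi"
  shows "in_P (\<lambda>e. w e + xi e)" and "ereal (alloc xi i) \<le> d i"
proof -
  obtain y where y: "y \<in> Pwd n m E0 f w d" and y_xi: "\<forall>e\<in>buyer_edges {i}. y e = xi e"
    using clinchable_transfer[OF xi zero_in_Pwd[OF w d]] by (metis (no_types, lifting))
  have xi_nonneg: "0 \<le> xi e" and xi_supp: "e \<notin> buyer_edges {i} \<Longrightarrow> xi e = 0" for e
    using xi unfolding clinchable_def by blast+
  show "in_P (\<lambda>e. w e + xi e)"
  proof (rule in_P_downward_closed[OF PwdD(2)[OF y]])
    fix e
    have "xi e \<le> y e"
      using xi_supp[of e] y_xi PwdD(1)[OF y, of e] by (cases "e \<in> buyer_edges {i}") auto
    then show "0 \<le> w e + xi e \<and> w e + xi e \<le> w e + y e"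
      using in_P_nonneg[OF w, of e] xi_nonneg[of e] by simp
  qed
  have "alloc xi i = alloc y i" using y_xi by simp
  then show "ereal (alloc xi i) \<le> d i"
    using PwdD(3)[OF y i] by simp
qed

lemma market_network: "finite K \<Longrightarrow> bipartite_network edges {1..m} K"
  by unfold_locales (simp_all add: finite_edges)

lemma slack_capacity_admissible:
  assumes w: "in_P w"
  shows "bipartite_network.admissible_capacity edges {1..m} (\<lambda>j X. cap j X - sum w X)"
proof -
  interpret net: bipartite_network edges "{1..m}" "{}" using market_network by simp
  show ?thesis
    unfolding net.admissible_capacity_def Es_def[symmetric]
  proof (intro ballI conjI allI impI)
    fix j :: nat assume j: "j \<in> {1..m}"
    show "cap j {} - sum w {} = 0" using cap_empty[OF j] by simp
    show "0 \<le> cap j X - sum w X" if "X \<subseteq> seller_edges j" for X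
      using in_P_le_cap[OF w j that] by simp
    show "submodular_on (seller_edges j) (\<lambda>X. cap j X - sum w X)"
      unfolding submodular_on_def
    proof (intro allI impI)
      fix F G assume F: "F \<subseteq> seller_edges j" and G: "G \<subseteq> seller_edges j"
      have "finite F" "finite G" using F G finite_seller_edges finite_subset by blast+
      then have "sum w (F \<union> G) + sum w (F \<inter> G) = sum w F + sum w G" by (rule sum.union_inter)
      with submodular_onD[OF cap_submodular[OF j] F G]
      show "cap j (F \<union> G) - sum w (F \<union> G) + (cap j (F \<inter> G) - sum w (F \<inter> G))
          \<le> cap j F - sum w F + (cap j G - sum w G)" by linarith
    qed
  qed
qed

lemma in_P_add:
  assumes w: "in_P w" and y_nonneg: "\<forall>e. 0 \<le> y e" and y_edges: "\<And>e. e \<notin> edges \<Longrightarrow> y e = 0"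
    and y_cap: "\<And>j X. j \<in> {1..m} \<Longrightarrow> X \<subseteq> seller_edges j \<Longrightarrow> sum y X \<le> cap j X - sum w X"
  shows "in_P (\<lambda>e. w e + y e)"
  unfolding inP_def
proof (intro conjI allI ballI impI)
  show "0 \<le> w e + y e" for e using y_nonneg[rule_format, of e] in_P_nonneg[OF w, of e] by simp
  show "w e + y e = 0" if "e \<notin> edges" for e
    using y_edges[OF that] in_P_vanishes[OF w that] by simp
  show "sum (\<lambda>e. w e + y e) F \<le> cap j F" if "j \<in> {1..m}" "F \<subseteq> seller_edges j" for j F
    using y_cap[OF that] by (simp add: sum.distrib)
qed

lemma flow_in_Pwd:
  assumes w: "in_P w" and d: "\<forall>k\<in>agents. 0 \<le> d k" and K: "K \<subseteq> agents"
    and y: "bipartite_network.is_flow edges {1..m} K (buyer_edges K) (\<lambda>j X. cap j X - sum w X) dd y"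
    and dd: "\<And>k. k \<in> K \<Longrightarrow> ereal (dd k) \<le> d k"
  shows "y \<in> Pwd n m E0 f w d"
proof -
  interpret net: bipartite_network edges "{1..m}" K
    using market_network finite_subset[OF K finite_agents] .
  have y_nonneg: "\<forall>e. 0 \<le> y e" and y_supp: "\<forall>e. e \<notin> buyer_edges K \<longrightarrow> y e = 0"
    and y_cap: "\<And>j X. j \<in> {1..m} \<Longrightarrow> X \<subseteq> seller_edges j \<Longrightarrow> sum y X \<le> cap j X - sum w X"
    and y_dem: "\<And>k. k \<in> K \<Longrightarrow> sum y {e \<in> buyer_edges K. fst e = k} \<le> dd k"
    using y unfolding net.is_flow_def Es_def[symmetric] by blast+
  have y_edges: "y e = 0" if "e \<notin> edges" for e
    using that y_supp buyer_edges_subset by blast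
  have y_dem': "ereal (alloc y k) \<le> d k" if "k \<in> agents" for k
  proof (cases "k \<in> K")
    case True
    then have "buyer_edges {k} = {e \<in> buyer_edges K. fst e = k}" unfolding Eb_def by auto
    then have "ereal (alloc y k) \<le> ereal (dd k)" using y_dem[OF True] by simp
    then show ?thesis using dd[OF True] by (rule order_trans)
  next
    case False
    then have "alloc y k = 0" using y_supp by (intro sum.neutral) (auto simp: Eb_def)
    then show ?thesis using d that by (simp add: zero_ereal_def)
  qed
  show ?thesis
    unfolding Pwd_def using y_nonneg y_edges in_P_add[OF w y_nonneg y_edges y_cap] y_dem' by blast
qed

end

section \<open>An invariant of the clinching auction\<close>

locale pca_market = market +
  fixes v B rho :: "nat \<Rightarrow> real" and eps :: real and xs :: "nat \<Rightarrow> real"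
  assumes v_pos: "\<forall>i\<in>{1..n}. 0 < v i"
    and B_nonneg: "\<forall>i\<in>{1..n}. 0 \<le> B i"
    and eps_pos: "0 < eps"
    and xstar: "xstar_eqs n m E0 f v B rho xs"
begin

abbreviation "bid \<equiv> Vx n v rho"
abbreviation "dem_at \<equiv> demand n B bid"

lemma xstar_eq:
  assumes "i \<in> agents"
  shows "xs i = (let mH = Min {fN n m E0 f (buyer_edges (H \<union> {i})) - sum xs H | H. H \<subseteq> Hs n m v rho i}
                 in if i \<le> n then min (B i / v i) mH else mH)"
  using bspec[OF xstar[unfolded xstar_eqs_def] assms] .

lemma xstar_le_budget:
  assumes "i \<in> agents" and "i \<le> n"
  shows "xs i \<le> B i / v i"
  using xstar_eq[OF assms(1)] assms(2) by (simp add: Let_def)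

lemma xstar_le_priority:
  assumes i: "i \<in> agents" and H: "H \<subseteq> Hs n m v rho i"
  shows "xs i \<le> fN n m E0 f (buyer_edges (H \<union> {i})) - sum xs H"
proof -
  let ?val = "\<lambda>H. fN n m E0 f (buyer_edges (H \<union> {i})) - sum xs H"
  have "Hs n m v rho i \<subseteq> agents" unfolding Hs_def by blast
  then have "finite (Pow (Hs n m v rho i))" using finite_agents finite_subset by blast
  moreover have "{?val H | H. H \<subseteq> Hs n m v rho i} = ?val ` Pow (Hs n m v rho i)" by blast
  ultimately have "finite {?val H | H. H \<subseteq> Hs n m v rho i}" by simp
  then have "Min {?val H | H. H \<subseteq> Hs n m v rho i} \<le> ?val H"
    using H by (intro Min_le) blast+
  moreover have "xs i \<le> Min {?val H | H. H \<subseteq> Hs n m v rho i}"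
    using xstar_eq[OF i] by (simp add: Let_def)
  ultimately show ?thesis by linarith
qed

text \<open>Peel off the agent of \<open>A\<close> that comes last in the priority order: all others lie in its
  set \<open>H\<^sub>i\<close>.\<close>

lemma xstar_sum_le:
  assumes A: "A \<subseteq> agents"
  shows "sum xs A \<le> fN n m E0 f (buyer_edges A)"
proof (cases "A = {}")
  case True
  then show ?thesis using fN_nonneg by simp
next
  case False
  have fin: "finite A" using A finite_agents finite_subset by blast
  define lowest where "lowest = Min (bid ` A)"
  define i where "i = Max {k \<in> A. bid k = lowest}"
  have "lowest \<in> bid ` A" using fin False unfolding lowest_def by simp
  then have "{k \<in> A. bid k = lowest} \<noteq> {}" by auto
  then have iA: "i \<in> A" and bid_i: "bid i = lowest"
    using Max_in[of "{k \<in> A. bid k = lowest}"] fin unfolding i_def by auto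
  have "A - {i} \<subseteq> Hs n m v rho i"
  proof
    fix k assume k: "k \<in> A - {i}"
    have "bid i \<le> bid k" using k fin bid_i unfolding lowest_def by simp
    moreover have "bid k = bid i \<Longrightarrow> k \<le> i" using k fin bid_i unfolding i_def by simp
    ultimately show "k \<in> Hs n m v rho i" using k A unfolding Hs_def by force
  qed
  from xstar_le_priority[OF _ this] iA A
  have "xs i \<le> fN n m E0 f (buyer_edges (A - {i} \<union> {i})) - sum xs (A - {i})" by blast
  moreover have "A - {i} \<union> {i} = A" using iA by blast
  ultimately show ?thesis using sum.remove[OF fin iA, of xs] by simp
qed

definition payments_bounded :: "(nat \<times> nat \<Rightarrow> real) \<Rightarrow> (nat \<Rightarrow> real) \<Rightarrow> (nat \<Rightarrow> real) \<Rightarrow> bool" where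
  "payments_bounded w c p \<longleftrightarrow> (\<forall>k. 0 \<le> c k) \<and> (\<forall>k\<in>agents. p k \<le> c k * alloc w k)
     \<and> (\<forall>k\<in>agents. k \<le> n \<longrightarrow> p k \<le> B k)"

lemma demand_cong: "c k = c' k \<Longrightarrow> p k = p' k \<Longrightarrow> dem_at c p k = dem_at c' p' k"
  unfolding demand_def by simp

lemma demand_nonneg:
  assumes b: "payments_bounded w c p" and k: "k \<in> agents"
  shows "0 \<le> dem_at c p k"
proof -
  have "0 \<le> c k" and "k \<le> n \<Longrightarrow> p k \<le> B k" using b k unfolding payments_bounded_def by auto
  then show ?thesis unfolding demand_def by auto
qed

text \<open>Truthful bidding enters here: an agent whose clock is still below its bid \<open>v k\<close> keeps
  demanding at least its share of \<open>x\<^sup>*\<close> not yet allocated, since \<open>x\<^sup>*\<^sub>k \<le> B\<^sub>k / v\<^sub>k\<close>.\<close>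

lemma deficit_le_demand:
  assumes b: "payments_bounded w c p" and k: "k \<in> agents" and pos: "0 < dem_at c p k"
  shows "ereal (xs k - alloc w k) \<le> dem_at c p k"
proof (cases "c k = 0 \<or> n < k")
  case True
  then have "dem_at c p k = \<infinity>"
    using pos by (cases "c k = 0") (simp_all add: demand_def split: if_split_asm)
  then show ?thesis by simp
next
  case False
  then have c_pos: "0 < c k" and kn: "k \<le> n"
    using b unfolding payments_bounded_def by (auto simp: less_le)
  have below_bid: "c k < v k"
    using pos False kn unfolding demand_def Vx_def by (auto split: if_splits)
  have v_pos_k: "0 < v k" and "0 \<le> B k" using v_pos B_nonneg k kn unfolding NN_def by auto
  have "xs k \<le> B k / v k" by (rule xstar_le_budget[OF k kn])
  also have "\<dots> \<le> B k / c k" using \<open>0 \<le> B k\<close> c_pos below_bid by (simp add: frac_le)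
  finally have "xs k - alloc w k \<le> (B k - c k * alloc w k) / c k"
    using c_pos by (simp add: field_simps)
  also have "\<dots> \<le> (B k - p k) / c k"
    using b k c_pos unfolding payments_bounded_def by (simp add: divide_right_mono)
  finally show ?thesis
    using False below_bid kn unfolding demand_def Vx_def by simp
qed

lemma demand_pos_antimono:
  assumes b: "payments_bounded w c p" and cc: "c k \<le> c' k" and pp: "p k \<le> p' k"
    and pos: "0 < dem_at c' p' k"
  shows "0 < dem_at c p k"
proof (cases "c k = 0")
  case False
  then have c_pos: "0 < c k" using b unfolding payments_bounded_def by (simp add: less_le)
  then have "c' k \<noteq> 0" using cc by simp
  then have "c' k < bid k" and budget: "k \<le> n \<Longrightarrow> 0 < (B k - p' k) / c' k"
    using pos unfolding demand_def by (auto split: if_splits)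
  moreover have "k \<le> n \<Longrightarrow> 0 < (B k - p k) / c k"
    using budget c_pos cc pp by (simp add: zero_less_divide_iff)
  ultimately show ?thesis using False cc unfolding demand_def by auto
qed (simp add: demand_def)

text \<open>The bound is required for every cut \<open>(S', G)\<close> of the flow network, not only for
  \<open>G j = E\<^sub>j \<inter> E\<^sub>S\<^sub>'\<^sub>'\<close> as in \<open>g\<^sub>x\<^sub>,\<^sub>d\<close>: max-flow min-cut needs all of them.\<close>

definition deficit_cut_bound :: "(nat \<times> nat \<Rightarrow> real) \<Rightarrow> (nat \<Rightarrow> ereal) \<Rightarrow> bool" where
  "deficit_cut_bound w d \<longleftrightarrow> (\<forall>S S' G. S \<subseteq> {k \<in> agents. 0 < d k} \<longrightarrow> S' \<subseteq> S \<longrightarrow>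
     (\<forall>j\<in>{1..m}. seller_edges j \<inter> buyer_edges S' \<subseteq> G j \<and> G j \<subseteq> seller_edges j) \<longrightarrow>
     ereal (sum xs S - (\<Sum>k\<in>S. alloc w k))
       \<le> ereal (\<Sum>j\<in>{1..m}. cap j (G j) - sum w (G j)) + sum d (S - S'))"

lemma deficit_cut_boundD:
  assumes "deficit_cut_bound w d" and "S \<subseteq> {k \<in> agents. 0 < d k}" and "S' \<subseteq> S"
    and "\<And>j. j \<in> {1..m} \<Longrightarrow> seller_edges j \<inter> buyer_edges S' \<subseteq> G j \<and> G j \<subseteq> seller_edges j"
  shows "ereal (sum xs S - (\<Sum>k\<in>S. alloc w k))
    \<le> ereal (\<Sum>j\<in>{1..m}. cap j (G j) - sum w (G j)) + sum d (S - S')"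
  by (rule assms(1)[unfolded deficit_cut_bound_def, rule_format, OF assms(2,3)]) (use assms(4) in blast)

lemma network_cut_bound:
  assumes w: "in_P w" and bound: "deficit_cut_bound w d" and S': "S' \<subseteq> {k \<in> agents. 0 < d k}"
    and cut: "bipartite_network.is_cut edges {1..m} S' (buyer_edges S') A G"
  shows "ereal (sum xs S' - (\<Sum>k\<in>S'. alloc w k))
      \<le> ereal (\<Sum>j\<in>{1..m}. cap j (G j) - sum w (G j)) + sum d (S' - A)"
    and "0 \<le> (\<Sum>j\<in>{1..m}. cap j (G j) - sum w (G j))"
proof -
  interpret net: bipartite_network edges "{1..m}" S'
    using market_network finite_subset[OF _ finite_agents] S' by blast
  have A: "A \<subseteq> S'" and G_sub: "\<And>j. j \<in> {1..m} \<Longrightarrow> G j \<subseteq> seller_edges j"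
    and G_sup: "\<And>j. j \<in> {1..m} \<Longrightarrow> {e \<in> buyer_edges S'. fst e \<in> A \<and> snd e = j} \<subseteq> G j"
    using cut unfolding net.is_cut_def Es_def[symmetric] by blast+
  have "seller_edges j \<inter> buyer_edges A = {e \<in> buyer_edges S'. fst e \<in> A \<and> snd e = j}" for j
    using A unfolding Eb_def Es_def by blast
  then show "ereal (sum xs S' - (\<Sum>k\<in>S'. alloc w k))
      \<le> ereal (\<Sum>j\<in>{1..m}. cap j (G j) - sum w (G j)) + sum d (S' - A)"
    using deficit_cut_boundD[OF bound S' A, of G] G_sub G_sup by simp
  show "0 \<le> (\<Sum>j\<in>{1..m}. cap j (G j) - sum w (G j))"
    using in_P_le_cap[OF w _ G_sub] by (intro sum_nonneg) simp
qed

text \<open>Max-flow min-cut needs real capacities: an infinite demand is replaced by a finite one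
  exceeding the target value \<open>R\<close>.\<close>

lemma deficit_flow:
  assumes w: "in_P w" and d: "\<forall>k\<in>agents. 0 \<le> d k" and bound: "deficit_cut_bound w d"
    and S': "S' \<subseteq> {k \<in> agents. 0 < d k}"
  obtains y where "y \<in> Pwd n m E0 f w d" and "\<forall>e. e \<notin> buyer_edges S' \<longrightarrow> y e = 0"
    and "sum xs S' - (\<Sum>k\<in>S'. alloc w k) \<le> sum y (buyer_edges S')"
proof -
  have S'_agents: "S' \<subseteq> agents" using S' by blast
  interpret net: bipartite_network edges "{1..m}" S'
    using market_network finite_subset[OF S'_agents finite_agents] .
  define R where "R = sum xs S' - (\<Sum>k\<in>S'. alloc w k)"
  let ?c = "\<lambda>j X. cap j X - sum w X"
  define dd where "dd k = (if d k = \<infinity> then \<bar>R\<bar> + 1 else real_of_ereal (d k))" for k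
  have dd_nonneg: "0 \<le> dd k" if "k \<in> agents" for k
    using d that unfolding dd_def by (simp add: real_of_ereal_pos)
  have d_dd: "d k = ereal (dd k)" if "k \<in> agents" "d k \<noteq> \<infinity>" for k
    using d that unfolding dd_def by (simp add: ereal_real)
  have cuts: "R \<le> net.cut_value ?c dd A G" if cut: "net.is_cut (buyer_edges S') A G" for A G
  proof -
    note network_cut_bound[OF w bound S' cut]
    then have bnd: "ereal R \<le> ereal (\<Sum>j\<in>{1..m}. ?c j (G j)) + sum d (S' - A)"
      and c_nonneg: "0 \<le> (\<Sum>j\<in>{1..m}. ?c j (G j))" unfolding R_def by simp_all
    show ?thesis
    proof (cases "\<exists>k\<in>S' - A. d k = \<infinity>")
      case True
      then obtain k where k: "k \<in> S' - A" "d k = \<infinity>" by blast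
      have "sum dd (S' - A) = dd k + sum dd (S' - A - {k})"
        using k(1) net.finite_K by (intro sum.remove) auto
      moreover have "dd k = \<bar>R\<bar> + 1" using k(2) unfolding dd_def by simp
      moreover have "0 \<le> sum dd (S' - A - {k})" using S'_agents dd_nonneg by (intro sum_nonneg) auto
      ultimately show ?thesis unfolding net.cut_value_def using c_nonneg by linarith
    next
      case False
      then have "sum d (S' - A) = (\<Sum>k\<in>S' - A. ereal (dd k))"
        using d_dd S'_agents by (intro sum.cong) auto
      then show ?thesis using bnd unfolding net.cut_value_def by simp
    qed
  qed
  obtain y where y: "net.is_flow (buyer_edges S') ?c dd y" and val: "R \<le> sum y (buyer_edges S')"
    using net.max_flow_min_cut[OF buyer_edges_subset _ slack_capacity_admissible[OF w] _ cuts]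
      S'_agents dd_nonneg seller_of_edge
    unfolding Eb_def by blast
  have "ereal (dd k) \<le> d k" if "k \<in> S'" for k
    using d_dd[of k] S'_agents that by (cases "d k = \<infinity>") auto
  then have "y \<in> Pwd n m E0 f w d" by (rule flow_in_Pwd[OF w d S'_agents y])
  moreover have "\<forall>e. e \<notin> buyer_edges S' \<longrightarrow> y e = 0" using y unfolding net.is_flow_def by blast
  ultimately show ?thesis using that val unfolding R_def by blast
qed

lemma deficit_cut_bound_change_one:
  assumes bound: "deficit_cut_bound w d"
    and pos: "\<And>k. k \<in> agents \<Longrightarrow> 0 < d' k \<Longrightarrow> 0 < d k"
    and same: "\<And>k. k \<noteq> l \<Longrightarrow> d' k = d k"
    and deficit: "l \<in> agents \<Longrightarrow> 0 < d' l \<Longrightarrow> ereal (xs l - alloc w l) \<le> d' l"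
  shows "deficit_cut_bound w d'"
  unfolding deficit_cut_bound_def
proof (intro allI impI)
  fix S S' G
  assume S: "S \<subseteq> {k \<in> agents. 0 < d' k}" and S'S: "S' \<subseteq> S"
    and G: "\<forall>j\<in>{1..m}. seller_edges j \<inter> buyer_edges S' \<subseteq> G j \<and> G j \<subseteq> seller_edges j"
  let ?C = "ereal (\<Sum>j\<in>{1..m}. cap j (G j) - sum w (G j))"
  have fin: "finite S" using finite_subset[OF _ finite_agents] S by blast
  have S_d: "S \<subseteq> {k \<in> agents. 0 < d k}" using S by (auto intro: pos)
  show "ereal (sum xs S - (\<Sum>k\<in>S. alloc w k)) \<le> ?C + sum d' (S - S')"
  proof (cases "l \<in> S - S'")
    case False
    then have "sum d' (S - S') = sum d (S - S')" by (intro sum.cong refl same) blast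
    then show ?thesis using deficit_cut_boundD[OF bound S_d S'S] G by simp
  next
    case True
    have "S - {l} \<subseteq> {k \<in> agents. 0 < d k}" "S' \<subseteq> S - {l}" using S_d S'S True by auto
    from deficit_cut_boundD[OF bound this] G
    have rest: "ereal (sum xs (S - {l}) - (\<Sum>k\<in>S - {l}. alloc w k)) \<le> ?C + sum d (S - {l} - S')"
      by simp
    have "sum d' (S - S') = d' l + sum d' (S - S' - {l})"
      using True fin by (intro sum.remove) auto
    also have "sum d' (S - S' - {l}) = sum d (S - {l} - S')"
      by (intro sum.cong same) auto
    finally have split_d: "sum d' (S - S') = d' l + sum d (S - {l} - S')" .
    have "sum xs S - (\<Sum>k\<in>S. alloc w k)
        = (xs l - alloc w l) + (sum xs (S - {l}) - (\<Sum>k\<in>S - {l}. alloc w k))"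
      using sum.remove[OF fin, of l xs] sum.remove[OF fin, of l "alloc w"] True by simp
    then have "ereal (sum xs S - (\<Sum>k\<in>S. alloc w k))
        = ereal (xs l - alloc w l) + ereal (sum xs (S - {l}) - (\<Sum>k\<in>S - {l}. alloc w k))"
      by simp
    also have "\<dots> \<le> d' l + (?C + sum d (S - {l} - S'))"
      using deficit True S by (intro add_mono rest) auto
    finally show ?thesis unfolding split_d by (simp add: ac_simps)
  qed
qed

text \<open>The defining property \<open>P\<^sup>i\<^sub>w\<^sub>,\<^sub>d(\<xi>) = P\<^sup>i\<^sub>w\<^sub>,\<^sub>d(0)\<close> of a clinchable \<open>\<xi>\<close> lets a flow serving the
  deficit of \<open>S'\<close> coexist with \<open>\<xi>\<close>, so that deficit still fits under the reduced cut.\<close>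

lemma deficit_fits_after_clinch:
  assumes w: "in_P w" and d: "\<forall>k\<in>agents. 0 \<le> d k" and bound: "deficit_cut_bound w d"
    and xi: "clinchable n m E0 f w d i xi"
    and S': "S' \<subseteq> {k \<in> agents. 0 < d k}" "i \<notin> S'"
    and G: "\<And>j. j \<in> {1..m} \<Longrightarrow> seller_edges j \<inter> buyer_edges S' \<subseteq> G j \<and> G j \<subseteq> seller_edges j"
  shows "sum xs S' - (\<Sum>k\<in>S'. alloc w k) \<le> (\<Sum>j\<in>{1..m}. cap j (G j) - sum w (G j) - sum xi (G j))"
proof -
  have S'_fin: "finite S'" using finite_subset[OF _ finite_agents] S'(1) by blast
  obtain y where y: "y \<in> Pwd n m E0 f w d" and y_supp: "\<forall>e. e \<notin> buyer_edges S' \<longrightarrow> y e = 0"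
    and y_val: "sum xs S' - (\<Sum>k\<in>S'. alloc w k) \<le> sum y (buyer_edges S')"
    using deficit_flow[OF w d bound S'(1)] by blast
  have "\<forall>e\<in>buyer_edges {i}. y e = 0" using y_supp S'(2) unfolding Eb_def by auto
  then obtain z where z: "z \<in> Pwd n m E0 f w d" and z_xi: "\<forall>e\<in>buyer_edges {i}. z e = xi e"
    and z_alloc: "\<forall>k\<in>agents - {i}. alloc z k = alloc y k"
    using clinchable_transfer[OF xi y] by blast
  have xi_supp: "\<forall>e. e \<notin> buyer_edges {i} \<longrightarrow> xi e = 0" using xi unfolding clinchable_def by blast
  have "(\<Sum>k\<in>S'. alloc y k) = (\<Sum>k\<in>S'. alloc z k)"
    by (rule sum.cong[OF refl]) (use z_alloc S' in force)
  then have "sum y (buyer_edges S') = sum z (buyer_edges S')"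
    using sum_alloc[OF S'_fin] by simp
  also have "\<dots> = (\<Sum>j\<in>{1..m}. sum z (buyer_edges S' \<inter> seller_edges j))"
    by (rule sum_seller_edges[OF buyer_edges_subset, symmetric])
  also have "\<dots> \<le> (\<Sum>j\<in>{1..m}. cap j (G j) - sum w (G j) - sum xi (G j))"
  proof (rule sum_mono)
    fix j assume j: "j \<in> {1..m}"
    have "z e \<ge> 0" for e using PwdD(1)[OF z] .
    then show "sum z (buyer_edges S' \<inter> seller_edges j) \<le> cap j (G j) - sum w (G j) - sum xi (G j)"
      using flow_fits_beside_clinch[OF PwdD(2)[OF z] _ z_xi xi_supp S'(2) j] G[OF j] by blast
  qed
  finally show ?thesis using y_val by linarith
qed

lemma deficit_sum_le_demand:
  assumes covered: "\<And>k. k \<in> agents \<Longrightarrow> 0 < d k \<Longrightarrow> ereal (xs k - alloc w k) \<le> d k"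
    and T: "T \<subseteq> {k \<in> agents. 0 < d k}" and more: "\<And>k. alloc w k \<le> alloc w' k"
  shows "ereal (\<Sum>k\<in>T. xs k - alloc w' k) \<le> sum d T"
proof -
  have "(\<Sum>k\<in>T. ereal (xs k - alloc w' k)) \<le> sum d T"
  proof (rule sum_mono)
    fix k assume "k \<in> T"
    then have "ereal (xs k - alloc w k) \<le> d k" using T covered by blast
    then show "ereal (xs k - alloc w' k) \<le> d k" using more[of k] by (simp add: order_trans[rotated])
  qed
  then show ?thesis by simp
qed

lemma deficit_cut_bound_clinch:
  assumes w: "in_P w" and d: "\<forall>k\<in>agents. 0 \<le> d k" and bound: "deficit_cut_bound w d"
    and covered: "\<And>k. k \<in> agents \<Longrightarrow> 0 < d k \<Longrightarrow> ereal (xs k - alloc w k) \<le> d k"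
    and xi: "clinchable n m E0 f w d i xi"
  shows "deficit_cut_bound (\<lambda>e. w e + xi e) d"
  unfolding deficit_cut_bound_def
proof (intro allI impI)
  fix S S' G
  assume S: "S \<subseteq> {k \<in> agents. 0 < d k}" and S'S: "S' \<subseteq> S"
    and G: "\<forall>j\<in>{1..m}. seller_edges j \<inter> buyer_edges S' \<subseteq> G j \<and> G j \<subseteq> seller_edges j"
  let ?w' = "\<lambda>e. w e + xi e"
  have fin: "finite S" using finite_subset[OF _ finite_agents] S by blast
  have xi_nonneg: "\<forall>e. 0 \<le> xi e" and xi_supp: "\<forall>e. e \<notin> buyer_edges {i} \<longrightarrow> xi e = 0"
    using xi unfolding clinchable_def by blast+
  have alloc_w': "alloc ?w' k = alloc w k + alloc xi k" for k
    by (simp add: sum.distrib)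
  have cut_w': "(\<Sum>j\<in>{1..m}. cap j (G j) - sum ?w' (G j))
      = (\<Sum>j\<in>{1..m}. cap j (G j) - sum w (G j)) - (\<Sum>j\<in>{1..m}. sum xi (G j))"
    by (simp add: sum.distrib sum_subtractf algebra_simps)
  show "ereal (sum xs S - (\<Sum>k\<in>S. alloc ?w' k))
      \<le> ereal (\<Sum>j\<in>{1..m}. cap j (G j) - sum ?w' (G j)) + sum d (S - S')"
  proof (cases "i \<in> S'")
    case True
    have "(\<Sum>k\<in>S - {i}. alloc xi k) = 0"
      by (rule sum.neutral) (use alloc_outside_support[OF xi_supp] in blast)
    then have "(\<Sum>k\<in>S. alloc ?w' k) = (\<Sum>k\<in>S. alloc w k) + alloc xi i"
      unfolding alloc_w' sum.distrib using sum.remove[OF fin, of i "alloc xi"] True S'S by auto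
    moreover have "ereal (sum xs S - (\<Sum>k\<in>S. alloc w k))
        \<le> ereal (\<Sum>j\<in>{1..m}. cap j (G j) - sum w (G j)) + sum d (S - S')"
      using deficit_cut_boundD[OF bound S S'S] G by simp
    moreover have "(\<Sum>j\<in>{1..m}. sum xi (G j)) = alloc xi i"
      using G by (intro clinched_amount_in_cut[OF xi_supp True]) blast
    ultimately show ?thesis
      unfolding cut_w' by (cases "sum d (S - S')") simp_all
  next
    case False
    have "sum xs S' - (\<Sum>k\<in>S'. alloc w k)
        \<le> (\<Sum>j\<in>{1..m}. cap j (G j) - sum w (G j) - sum xi (G j))"
      using S S'S G False by (intro deficit_fits_after_clinch[OF w d bound xi]) blast+
    moreover have "(\<Sum>k\<in>S'. alloc ?w' k) = (\<Sum>k\<in>S'. alloc w k)"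
      unfolding alloc_w' using False alloc_outside_support[OF xi_supp] by (intro sum.cong refl) force
    moreover have "ereal (\<Sum>k\<in>S - S'. xs k - alloc ?w' k) \<le> sum d (S - S')"
    proof (rule deficit_sum_le_demand[OF covered])
      show "S - S' \<subseteq> {k \<in> agents. 0 < d k}" using S by blast
      have "0 \<le> alloc xi k" for k by (intro sum_nonneg) (use xi_nonneg in blast)
      then show "alloc w k \<le> alloc ?w' k" for k unfolding alloc_w' by simp
    qed
    moreover have "sum xs S - (\<Sum>k\<in>S. alloc ?w' k)
        = (sum xs S' - (\<Sum>k\<in>S'. alloc ?w' k)) + (\<Sum>k\<in>S - S'. xs k - alloc ?w' k)"
      using sum.subset_diff[OF S'S fin, of xs] sum.subset_diff[OF S'S fin, of "alloc ?w'"]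
      by (simp add: sum_subtractf)
    ultimately show ?thesis
      unfolding cut_w' by (cases "sum d (S - S')") (simp_all add: sum_subtractf)
  qed
qed

lemma payments_bounded_clinch:
  assumes b: "payments_bounded w c p" and xi_nonneg: "\<forall>e. 0 \<le> xi e"
    and a: "ereal (alloc xi i) \<le> dem_at c p i"
  shows "payments_bounded (\<lambda>e. w e + xi e) c (p(i := p i + c i * alloc xi i))"
  unfolding payments_bounded_def
proof (intro conjI allI ballI impI)
  have c_nonneg: "0 \<le> c k" for k using b unfolding payments_bounded_def by blast
  then show "0 \<le> c k" for k .
  have a_nonneg: "0 \<le> alloc xi k" for k by (intro sum_nonneg) (use xi_nonneg in blast)
  fix k assume k: "k \<in> agents"
  have "p k \<le> c k * alloc w k" using b k unfolding payments_bounded_def by blast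
  moreover have "c k * alloc w k \<le> c k * alloc w k + c k * alloc xi k"
    using c_nonneg a_nonneg by simp
  ultimately show "(p(i := p i + c i * alloc xi i)) k \<le> c k * alloc (\<lambda>e. w e + xi e) k"
    by (auto simp: sum.distrib distrib_left)
  assume kn: "k \<le> n"
  have pk: "p k \<le> B k" using b k kn unfolding payments_bounded_def by blast
  have "c i * alloc xi i \<le> B i - p i" if "k = i"
  proof (cases "c i = 0 \<or> bid i \<le> c i")
    case True
    then have "c i = 0 \<or> dem_at c p i = 0" unfolding demand_def by auto
    then have "c i = 0 \<or> alloc xi i = 0"
      using a a_nonneg[of i] by (auto simp: zero_ereal_def)
    then show ?thesis using pk that by auto
  next
    case False
    then have "alloc xi i \<le> (B i - p i) / c i" using a kn that unfolding demand_def by auto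
    then show ?thesis using False c_nonneg[of i] by (simp add: field_simps)
  qed
  then show "(p(i := p i + c i * alloc xi i)) k \<le> B k" using pk by auto
qed

definition pca_invariant :: "pca_state \<Rightarrow> bool" where
  "pca_invariant st \<longleftrightarrow> in_P (wt st) \<and> dem st = dem_at (clk st) (pay st) \<and>
     payments_bounded (wt st) (clk st) (pay st) \<and> deficit_cut_bound (wt st) (dem st)"

lemma pca_invariant_init: "pca_invariant pca_init"
  unfolding pca_invariant_def
proof (intro conjI)
  show "in_P (wt pca_init)" unfolding inP_def pca_init_def using cap_nonneg by simp
  show "dem pca_init = dem_at (clk pca_init) (pay pca_init)"
    unfolding pca_init_def demand_def by simp
  show "payments_bounded (wt pca_init) (clk pca_init) (pay pca_init)"
    unfolding payments_bounded_def pca_init_def using B_nonneg by (simp add: NN_def)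
  show "deficit_cut_bound (wt pca_init) (dem pca_init)"
    unfolding deficit_cut_bound_def
  proof (intro allI impI)
    fix S S' G
    assume S: "S \<subseteq> {k \<in> agents. 0 < dem pca_init k}" and S'S: "S' \<subseteq> S"
      and G: "\<forall>j\<in>{1..m}. seller_edges j \<inter> buyer_edges S' \<subseteq> G j \<and> G j \<subseteq> seller_edges j"
    have fin: "finite S" using finite_subset[OF _ finite_agents] S by blast
    show "ereal (sum xs S - (\<Sum>k\<in>S. alloc (wt pca_init) k))
        \<le> ereal (\<Sum>j\<in>{1..m}. cap j (G j) - sum (wt pca_init) (G j)) + sum (dem pca_init) (S - S')"
    proof (cases "S' = S")
      case True
      have "sum xs S \<le> fN n m E0 f (buyer_edges S)" using xstar_sum_le S by blast
      also have "\<dots> \<le> (\<Sum>j\<in>{1..m}. cap j (G j))"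
        unfolding fN_def using G True by (intro sum_mono cap_mono) auto
      finally show ?thesis using True by (simp add: pca_init_def)
    next
      case False
      then have "sum (dem pca_init) (S - S') = \<infinity>"
        using S'S fin by (simp add: pca_init_def sum_Pinfty) blast
      then show ?thesis by simp
    qed
  qed
qed

lemma pca_invariant_clock_advance:
  assumes inv: "pca_invariant st"
  shows "pca_invariant (clock_advance n m B bid eps st)"
proof -
  define l c p w d where "l = ptr st" and "c = clk st" and "p = pay st" and "w = wt st" and "d = dem st"
  define c' where "c' = c(l := c l + eps)"
  have w: "in_P w" and d: "d = dem_at c p" and b: "payments_bounded w c p" and bound: "deficit_cut_bound w d"
    using inv unfolding pca_invariant_def l_def c_def p_def w_def d_def by auto
  have c_le: "c k \<le> c' k" for k unfolding c'_def using eps_pos by simp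
  have same: "dem_at c' p k = dem_at c p k" if "k \<noteq> l" for k
    using that unfolding c'_def by (intro demand_cong) auto
  have d': "d(l := dem_at c' p l) = dem_at c' p"
    unfolding d using same by (intro ext) simp
  have b': "payments_bounded w c' p"
    unfolding payments_bounded_def
  proof (intro conjI allI ballI impI)
    show "0 \<le> c' k" for k using b c_le order_trans unfolding payments_bounded_def by blast
    fix k assume k: "k \<in> agents"
    have "0 \<le> alloc w k" using in_P_nonneg[OF w] by (simp add: sum_nonneg)
    then have "c k * alloc w k \<le> c' k * alloc w k" using c_le by (simp add: mult_right_mono)
    then show "p k \<le> c' k * alloc w k" using b k unfolding payments_bounded_def by force
    show "k \<le> n \<Longrightarrow> p k \<le> B k" using b k unfolding payments_bounded_def by blast
  qed
  have "deficit_cut_bound w (dem_at c' p)"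
  proof (rule deficit_cut_bound_change_one[OF bound])
    show "0 < d k" if "0 < dem_at c' p k" for k
      unfolding d using demand_pos_antimono[OF b c_le order.refl that] .
    show "dem_at c' p k = d k" if "k \<noteq> l" for k
      unfolding d using same[OF that] .
    show "l \<in> agents \<Longrightarrow> 0 < dem_at c' p l \<Longrightarrow> ereal (xs l - alloc w l) \<le> dem_at c' p l"
      by (rule deficit_le_demand[OF b'])
  qed
  then show ?thesis
    using w b' d' unfolding pca_invariant_def clock_advance_def Let_def l_def c_def p_def w_def d_def c'_def
    by simp
qed

lemma pca_invariant_clinch_update:
  assumes inv: "pca_invariant st" and i: "i \<in> agents"
    and xi: "max_clinch n m E0 f (wt st) (dem st) i xi"
  shows "pca_invariant (clinch_update n m E0 B bid i xi st)"
proof -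
  define c p w d where "c = clk st" and "p = pay st" and "w = wt st" and "d = dem st"
  define p' where "p' = p(i := p i + c i * alloc xi i)"
  have w: "in_P w" and d: "d = dem_at c p" and b: "payments_bounded w c p" and bound: "deficit_cut_bound w d"
    using inv unfolding pca_invariant_def c_def p_def w_def d_def by auto
  have cl: "clinchable n m E0 f w d i xi" using xi unfolding max_clinch_def w_def d_def by blast
  have xi_nonneg: "\<forall>e. 0 \<le> xi e" using cl unfolding clinchable_def by blast
  have d_nonneg: "\<forall>k\<in>agents. 0 \<le> d k" using demand_nonneg[OF b] d by simp
  have w': "in_P (\<lambda>e. w e + xi e)" and a: "ereal (alloc xi i) \<le> d i"
    using clinch_feasible[OF w d_nonneg i cl] by auto
  have b': "payments_bounded (\<lambda>e. w e + xi e) c p'"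
    unfolding p'_def using payments_bounded_clinch[OF b xi_nonneg] a d by simp
  have "deficit_cut_bound (\<lambda>e. w e + xi e) d"
    using deficit_cut_bound_clinch[OF w d_nonneg bound _ cl] deficit_le_demand[OF b] d by simp
  then have bound': "deficit_cut_bound (\<lambda>e. w e + xi e) (dem_at c p')"
  proof (rule deficit_cut_bound_change_one)
    have "0 \<le> alloc xi i" by (intro sum_nonneg) (use xi_nonneg in blast)
    then have "0 \<le> c i * alloc xi i"
      using b unfolding payments_bounded_def by simp
    then have "p k \<le> p' k" for k unfolding p'_def by simp
    then show "0 < d k" if "0 < dem_at c p' k" for k
      unfolding d using demand_pos_antimono[OF b order.refl _ that] by blast
    show "dem_at c p' k = d k" if "k \<noteq> i" for k
      unfolding d p'_def using that by (intro demand_cong) auto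
    show "i \<in> agents \<Longrightarrow> 0 < dem_at c p' i \<Longrightarrow> ereal (xs i - alloc (\<lambda>e. w e + xi e) i) \<le> dem_at c p' i"
      by (rule deficit_le_demand[OF b'])
  qed
  show ?thesis
    using w' b' bound' unfolding pca_invariant_def clinch_update_def Let_def c_def p_def w_def p'_def
    by simp
qed

lemma pca_invariant_clinch_upto:
  "clinch_upto n m E0 f B bid k st st' \<Longrightarrow> pca_invariant st \<Longrightarrow> pca_invariant st'"
proof (induction rule: clinch_upto.induct)
  case (clinch_step k st st1 xi)
  then show ?case by (intro pca_invariant_clinch_update) (auto simp: NN_def)
qed

lemma pca_invariant_reach:
  "pca_reach n m E0 f B bid eps st \<Longrightarrow> pca_invariant st"
proof (induction rule: pca_reach.induct)
  case reach_init
  show ?case by (rule pca_invariant_init)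
next
  case (reach_iter st st')
  then show ?case
    unfolding pca_iter_def using pca_invariant_clinch_upto pca_invariant_clock_advance by blast
qed

lemma gfun_ge_deficit:
  assumes bound: "deficit_cut_bound w d" and S: "S \<subseteq> {k \<in> agents. 0 < d k}"
  shows "ereal (sum xs S - (\<Sum>k\<in>S. alloc w k)) \<le> gfun n m E0 f (\<lambda>k. alloc w k) d S"
proof -
  let ?val = "\<lambda>S''. ereal (fN n m E0 f (buyer_edges S'') - (\<Sum>k\<in>S''. alloc w k))"
  let ?inner = "\<lambda>S'. {?val S'' | S''. S' \<subseteq> S'' \<and> S'' \<subseteq> agents}"
  have fin_S: "finite S" using finite_subset[OF _ finite_agents] S by blast
  have le_val: "ereal (sum xs S - (\<Sum>k\<in>S. alloc w k)) \<le> ?val S'' + sum d (S - S')"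
    if S': "S' \<subseteq> S" and S'': "S' \<subseteq> S''" "S'' \<subseteq> agents" for S' S''
  proof -
    have "finite S''" using finite_subset[OF S''(2) finite_agents] .
    then have "(\<Sum>j\<in>{1..m}. cap j (buyer_edges S'' \<inter> seller_edges j)
        - sum w (buyer_edges S'' \<inter> seller_edges j)) = fN n m E0 f (buyer_edges S'') - (\<Sum>k\<in>S''. alloc w k)"
      unfolding fN_def sum_subtractf sum_seller_edges[OF buyer_edges_subset] sum_alloc[OF \<open>finite S''\<close>]
      by (simp add: Int_commute)
    moreover have "seller_edges j \<inter> buyer_edges S' \<subseteq> buyer_edges S'' \<inter> seller_edges j" for j
      using S'' unfolding Eb_def by blast
    ultimately show ?thesis
      using deficit_cut_boundD[OF bound S S', of "\<lambda>j. buyer_edges S'' \<inter> seller_edges j"] by simp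
  qed
  have le_min: "ereal (sum xs S - (\<Sum>k\<in>S. alloc w k)) \<le> Min (?inner S') + sum d (S - S')"
    if S': "S' \<subseteq> S" for S'
  proof -
    have "?inner S' = ?val ` {S''. S' \<subseteq> S'' \<and> S'' \<subseteq> agents}" by blast
    moreover have "finite {S''. S' \<subseteq> S'' \<and> S'' \<subseteq> agents}"
      using finite_agents by (simp add: finite_subset[of _ "Pow agents"])
    ultimately have "finite (?inner S')" by simp
    moreover have "?inner S' \<noteq> {}" using S' S by blast
    ultimately have "Min (?inner S') \<in> ?inner S'" by (rule Min_in)
    then show ?thesis using le_val[OF S'] by force
  qed
  have "finite {Min (?inner S') + sum d (S - S') | S'. S' \<subseteq> S}"
    using fin_S by (simp add: setcompr_eq_image)
  then show ?thesis
    unfolding gfun_def using le_min by (subst Min_ge_iff) auto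
qed

end

theorem theorem3p7:
  fixes n m :: nat and E0 :: "(nat \<times> nat) set"
    and f :: "nat \<Rightarrow> (nat \<times> nat) set \<Rightarrow> real"
    and v B rho :: "nat \<Rightarrow> real" and eps :: real
    and xs :: "nat \<Rightarrow> real" and st :: pca_state and S :: "nat set"
  assumes E0: "E0 \<subseteq> {1..n} \<times> {1..m}"
    and f_empty: "\<forall>j\<in>{1..m}. f j {} = 0"
    and f_nonneg: "\<forall>j\<in>{1..m}. \<forall>F. F \<subseteq> {e \<in> E0. snd e = j} \<longrightarrow> 0 \<le> f j F"
    and f_mono: "\<forall>j\<in>{1..m}. \<forall>F G. F \<subseteq> G \<and> G \<subseteq> {e \<in> E0. snd e = j} \<longrightarrow> f j F \<le> f j G"
    and f_submod: "\<forall>j\<in>{1..m}. \<forall>F G. F \<subseteq> {e \<in> E0. snd e = j} \<and> G \<subseteq> {e \<in> E0. snd e = j} \<longrightarrow>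
                      f j (F \<union> G) + f j (F \<inter> G) \<le> f j F + f j G"
    and v_pos: "\<forall>i\<in>{1..n}. 0 < v i"
    and B_nonneg: "\<forall>i\<in>{1..n}. 0 \<le> B i"
    and rho_pos: "\<forall>j\<in>{1..m}. 0 < rho j"
    and eps_pos: "0 < eps"
    and v_grid: "\<forall>i\<in>{1..n}. \<exists>k::nat. 1 \<le> k \<and> v i = real k * eps"
    and rho_grid: "\<forall>j\<in>{1..m}. \<exists>k::nat. 1 \<le> k \<and> rho j = real k * eps"
    and xstar: "xstar_eqs n m E0 f v B rho xs"
    and reach: "pca_reach n m E0 f B (Vx n v rho) eps st"
    and running: "\<exists>i\<in>NN n m. dem st i \<noteq> 0"
    and S: "S \<subseteq> {i \<in> NN n m. dem st i > 0}"
  shows "gfun n m E0 f (\<lambda>i. sum (wt st) (Eb n m E0 {i})) (dem st) S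
           \<ge> ereal (sum xs S - (\<Sum>i\<in>S. sum (wt st) (Eb n m E0 {i})))"
proof -
  interpret pca_market n m E0 f v B rho eps xs
    by unfold_locales (use assms in auto)
  \<comment> \<open>The invariant holds in every reachable state.\<close>
  have "pca_invariant st" by (rule pca_invariant_reach[OF reach])
  then have "deficit_cut_bound (wt st) (dem st)" unfolding pca_invariant_def by blast
  from gfun_ge_deficit[OF this S] show ?thesis by simp
qed

end
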